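(* Let $G=(V,E)$ be a finite simple graph, $\mathbb{K}$ a field, $R=E_{\mathbb{K}}[\mathrm{HSTAB}(G)]$ and $\omega$ the canonical ideal of $R$. Let $n\in\mathbb{Z}$ and $\mu\in\mathbb{Z}^{V^-}$. Then $T^\mu\in\omega^{(n)}$ if and only if $\mu\in U^{(n)}$, where $U^{(n)}$ is the set of $\mu\in\mathbb{Z}^{V^-}$ such that $\mu(z)\ge n$ for all $z\in V$, $\mu^+(K)\le \mu(-\infty)-n$ for every maximal clique $K$ of $G$, and $\mu^+(C)\le \mu(-\infty)\frac{\#C-1}{2}-n$ for every odd cycle $C$ of $G$ without chord and of length at least $5$.
   Context: Graphs are finite simple without loops. For $f\in\mathbb{R}^V$ (or $\mathbb{Z}^{V^-}$) and $B\subseteq V$, $f^+(B)=\sum_{b\in B}f(b)$. An odd cycle is (the vertex set $C$ of) a cycle of odd length; "without chord" means no two non-consecutive vertices are adjacent. $\mathrm{HSTAB}(G)$ is the set of $f\in\mathbb{R}^V$ with $f(x)\ge0$ for all $x\in V$, $f^+(K)\le1$ for every clique $K$, and $f^+(C)\le\frac{\#C-1}{2}$ for every odd cycle $C$. With $-\infty$ a new symbol, $V^-=V\cup\{-\infty\}$, $T^f=\prod_{x\in V^-}T_x^{f(x)}$ for $f\in\mathbb{Z}^{V^-}$, $\deg T_x=0$ ($x\in V$), $\deg T_{-\infty}=1$, the Ehrhart ring is $E_{\mathbb{K}}[\mathrm{HSTAB}(G)]=\mathbb{K}[T^f: f(-\infty)>0,\ \frac{1}{f(-\infty)}f|_V\in\mathrm{HSTAB}(G)]$.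 Its canonical ideal $\omega$ is the $\mathbb{K}$-span of the $T^f$ with $f(-\infty)>0$ and $\frac{1}{f(-\infty)}f|_V$ in the relative interior of $\mathrm{HSTAB}(G)$. For a Noetherian normal domain $R$ with quotient field $Q(R)$, the divisorial ideals form a group under $I\cdot J=R:_{Q(R)}(R:_{Q(R)}IJ)$; $I^{(n)}$ denotes the $n$-th power of $I$ in this group (so $\omega^{(-1)}=R:_{Q(R)}\omega$, $\omega^{(0)}=R$). *)

theory Defs
  imports "HOL-Analysis.Analysis" "HOL-Library.Poly_Mapping" "HOL-Library.Function_Algebras"
begin

definition simple_graph :: "('v::finite \<Rightarrow> 'v \<Rightarrow> bool) \<Rightarrow> bool" where
  "simple_graph E \<longleftrightarrow> (\<forall>x y. E x y \<longrightarrow> E y x) \<and> (\<forall>x. \<not> E x x)"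

definition is_clique :: "('v \<Rightarrow> 'v \<Rightarrow> bool) \<Rightarrow> 'v set \<Rightarrow> bool" where
  "is_clique E K \<longleftrightarrow> (\<forall>x\<in>K. \<forall>y\<in>K. x \<noteq> y \<longrightarrow> E x y)"

definition is_maximal_clique :: "('v \<Rightarrow> 'v \<Rightarrow> bool) \<Rightarrow> 'v set \<Rightarrow> bool" where
  "is_maximal_clique E K \<longleftrightarrow> is_clique E K \<and> (\<forall>K'. is_clique E K' \<and> K \<subseteq> K' \<longrightarrow> K' = K)"

definition is_cycle :: "('v \<Rightarrow> 'v \<Rightarrow> bool) \<Rightarrow> 'v list \<Rightarrow> bool" where
  "is_cycle E xs \<longleftrightarrow> length xs \<ge> 3 \<and> distinct xs \<and>
     (\<forall>i < length xs. E (xs ! i) (xs ! (Suc i mod length xs)))"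

definition chordless :: "('v \<Rightarrow> 'v \<Rightarrow> bool) \<Rightarrow> 'v list \<Rightarrow> bool" where
  "chordless E xs \<longleftrightarrow> (\<forall>i < length xs. \<forall>j < length xs. E (xs ! i) (xs ! j) \<longrightarrow>
       j = Suc i mod length xs \<or> i = Suc j mod length xs)"

definition is_odd_cycle :: "('v \<Rightarrow> 'v \<Rightarrow> bool) \<Rightarrow> 'v set \<Rightarrow> bool" where
  "is_odd_cycle E C \<longleftrightarrow> (\<exists>xs. is_cycle E xs \<and> set xs = C \<and> odd (length xs))"

definition is_chordless_odd_cycle_ge5 :: "('v \<Rightarrow> 'v \<Rightarrow> bool) \<Rightarrow> 'v set \<Rightarrow> bool" where
  "is_chordless_odd_cycle_ge5 E C \<longleftrightarrow>
     (\<exists>xs. is_cycle E xs \<and> chordless E xs \<and> set xs = C \<and> odd (length xs) \<and> length xs \<ge> 5)"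

definition HSTAB :: "('v::finite \<Rightarrow> 'v \<Rightarrow> bool) \<Rightarrow> (real ^ 'v) set" where
  "HSTAB E = {f. (\<forall>x. f $ x \<ge> 0)
              \<and> (\<forall>K. is_clique E K \<longrightarrow> (\<Sum>x\<in>K. f $ x) \<le> 1)
              \<and> (\<forall>C. is_odd_cycle E C \<longrightarrow> (\<Sum>x\<in>C. f $ x) \<le> (real (card C) - 1) / 2)}"

text \<open>V^- is modelled as 'v option, with None playing the role of -\<infinity>.\<close>

type_synonym ('v, 'k) laurent = "('v option \<Rightarrow> int) \<Rightarrow>\<^sub>0 'k"

definition monom :: "('v option \<Rightarrow> int) \<Rightarrow> ('v, 'k::field) laurent" ("T\<^bsup>_\<^esup>") where
  "monom f = Poly_Mapping.single f 1"

definition restrV :: "('v::finite option \<Rightarrow> int) \<Rightarrow> real ^ 'v" where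
  "restrV f = (\<chi> x. real_of_int (f (Some x)) / real_of_int (f None))"

inductive_set ehrhart_ring :: "('v::finite \<Rightarrow> 'v \<Rightarrow> bool) \<Rightarrow> ('v, 'k::field) laurent set"
  for E where
  const: "Poly_Mapping.single 0 c \<in> ehrhart_ring E"
| gen: "f None > 0 \<Longrightarrow> restrV f \<in> HSTAB E \<Longrightarrow> monom f \<in> ehrhart_ring E"
| add: "p \<in> ehrhart_ring E \<Longrightarrow> q \<in> ehrhart_ring E \<Longrightarrow> p + q \<in> ehrhart_ring E"
| mult: "p \<in> ehrhart_ring E \<Longrightarrow> q \<in> ehrhart_ring E \<Longrightarrow> p * q \<in> ehrhart_ring E"

definition canonical_ideal :: "('v::finite \<Rightarrow> 'v \<Rightarrow> bool) \<Rightarrow> ('v, 'k::field) laurent set" where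
  "canonical_ideal E = {p. \<forall>f \<in> Poly_Mapping.keys p. f None > 0 \<and> restrV f \<in> rel_interior (HSTAB E)}"

text \<open>Elements of the quotient field Q(R) are represented as pairs (a,b) with a, b in R, b \<noteq> 0,
  standing for a/b (inside the fraction field of the Laurent polynomial ring, a domain).
  Subsets of Q(R) are sets of such pairs; an element is identified with every
  representing pair.\<close>

type_synonym ('v, 'k) frac = "('v, 'k) laurent \<times> ('v, 'k) laurent"

definition QF :: "('v, 'k::field) laurent set \<Rightarrow> ('v, 'k) frac set" where
  "QF R = {(a, b). a \<in> R \<and> b \<in> R \<and> b \<noteq> 0}"

definition fmul :: "('v, 'k::field) frac \<Rightarrow> ('v, 'k) frac \<Rightarrow> ('v, 'k) frac" where
  "fmul x y = (fst x * fst y, snd x * snd y)"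

definition fadd :: "('v, 'k::field) frac \<Rightarrow> ('v, 'k) frac \<Rightarrow> ('v, 'k) frac" where
  "fadd x y = (fst x * snd y + fst y * snd x, snd x * snd y)"

definition frac_in :: "('v, 'k::field) frac \<Rightarrow> ('v, 'k) laurent set \<Rightarrow> bool" where
  "frac_in x A \<longleftrightarrow> (\<exists>a\<in>A. fst x = a * snd x)"

definition as_frac :: "('v, 'k::field) laurent set \<Rightarrow> ('v, 'k) laurent set \<Rightarrow> ('v, 'k) frac set" where
  "as_frac R A = {x \<in> QF R. frac_in x A}"

definition colon :: "('v, 'k::field) laurent set \<Rightarrow> ('v, 'k) frac set \<Rightarrow> ('v, 'k) frac set" where
  "colon R I = {x \<in> QF R. \<forall>y\<in>I. frac_in (fmul x y) R}"

inductive_set sums_of_products :: "('v, 'k::field) frac set \<Rightarrow> ('v, 'k) frac set \<Rightarrow> ('v, 'k) frac set"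
  for I J where
  zero: "(0, 1) \<in> sums_of_products I J"
| step: "s \<in> sums_of_products I J \<Longrightarrow> x \<in> I \<Longrightarrow> y \<in> J \<Longrightarrow> fadd s (fmul x y) \<in> sums_of_products I J"

text \<open>The group operation on divisorial ideals: I \<cdot> J = R : (R : IJ).\<close>
definition dmul :: "('v, 'k::field) laurent set \<Rightarrow> ('v, 'k) frac set \<Rightarrow> ('v, 'k) frac set \<Rightarrow> ('v, 'k) frac set" where
  "dmul R I J = colon R (colon R (sums_of_products I J))"

definition dpow :: "('v, 'k::field) laurent set \<Rightarrow> ('v, 'k) frac set \<Rightarrow> int \<Rightarrow> ('v, 'k) frac set" where
  "dpow R I n = (if n \<ge> 0 then (dmul R I ^^ nat n) (as_frac R R)
                 else (dmul R (colon R I) ^^ nat (- n)) (as_frac R R))"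

definition mem_frac :: "('v, 'k::field) laurent \<Rightarrow> ('v, 'k) frac set \<Rightarrow> bool" where
  "mem_frac p I \<longleftrightarrow> (\<exists>x\<in>I. fst x = p * snd x)"

definition U_set :: "('v::finite \<Rightarrow> 'v \<Rightarrow> bool) \<Rightarrow> int \<Rightarrow> ('v option \<Rightarrow> int) set" where
  "U_set E n = {\<mu>. (\<forall>z. \<mu> (Some z) \<ge> n)
     \<and> (\<forall>K. is_maximal_clique E K \<longrightarrow> (\<Sum>x\<in>K. \<mu> (Some x)) \<le> \<mu> None - n)
     \<and> (\<forall>C. is_chordless_odd_cycle_ge5 E C \<longrightarrow>
            real_of_int (\<Sum>x\<in>C. \<mu> (Some x)) \<le> real_of_int (\<mu> None) * (real (card C) - 1) / 2 - real_of_int n)}"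

end

theory Submission
  imports Defs
begin

(* HSTAB(G) is cut out by x\<^sub>z \<ge> 0, by x(K) \<le> 1 for maximal cliques K and by
   x(C) \<le> (#C - 1)/2 for odd holes C (chordless odd cycles of length \<ge> 5): every other clique
   inequality is weaker, and an odd cycle with a chord splits into a shorter odd cycle and an
   even path, so its inequality follows by induction.  Homogenising these facets gives finitely
   many integral linear forms \<sigma>\<^sub>c on \<int>^V\<^sup>-; R is spanned by the T\<^bsup>\<mu>\<^esup> with all \<sigma>\<^sub>c(\<mu>) \<ge> 0, and
   \<omega> by those with all \<sigma>\<^sub>c(\<mu>) \<ge> 1.  Each facet carries a lattice point lying strictly inside
   all the other facets, so every \<sigma>\<^sub>c attains each value a on the shifted cone of the \<mu> with
   all \<sigma>\<^sub>c(\<mu>) \<ge> a.  For the spans U\<^sub>a of these shifted cones this gives R : U\<^sub>a = U\<^sub>-\<^sub>a and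
   R : (R : U\<^sub>a U\<^sub>b) = U\<^sub>a\<^sub>+\<^sub>b, hence \<omega>\<^bsup>(n)\<^esup> = U\<^sub>n, which is the claim. *)

section \<open>Laurent polynomials\<close>

lemma add_eq_add_le_le_imp_eq:
  fixes x y a b :: "'a::{ordered_cancel_comm_monoid_add, linorder}"
  assumes "x + y = a + b" "x \<le> a" "y \<le> b"
  shows "x = a \<and> y = b"
  using assms add_less_le_mono[of x a y b] add_le_less_mono[of x a y b] by fastforce

lemma mult_neq_0_if_ordered_embedding:
  fixes f g :: "'a::monoid_add \<Rightarrow>\<^sub>0 'b::semiring_no_zero_divisors"
    and \<phi> :: "'a \<Rightarrow> 'c::{ordered_cancel_comm_monoid_add, linorder}"
  assumes inj: "inj \<phi>" and hom: "\<And>a b. \<phi> (a + b) = \<phi> a + \<phi> b"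
    and "f \<noteq> 0" "g \<noteq> 0"
  shows "f * g \<noteq> 0"
proof -
  have top: "\<exists>a\<in>Poly_Mapping.keys h. \<forall>a'\<in>Poly_Mapping.keys h. \<phi> a' \<le> \<phi> a"
    if "h \<noteq> 0" for h :: "'a \<Rightarrow>\<^sub>0 'b"
  proof -
    have "Max (\<phi> ` Poly_Mapping.keys h) \<in> \<phi> ` Poly_Mapping.keys h"
      using that by (intro Max_in) simp_all
    then show ?thesis
      by (metis Max_ge finite_imageI finite_keys imageE imageI)
  qed
  obtain a where a: "a \<in> Poly_Mapping.keys f" "\<And>a'. a' \<in> Poly_Mapping.keys f \<Longrightarrow> \<phi> a' \<le> \<phi> a"
    using top[OF \<open>f \<noteq> 0\<close>] by blast
  obtain b where b: "b \<in> Poly_Mapping.keys g" "\<And>b'. b' \<in> Poly_Mapping.keys g \<Longrightarrow> \<phi> b' \<le> \<phi> b"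
    using top[OF \<open>g \<noteq> 0\<close>] by blast
  have unique: "a' = a \<and> b' = b"
    if "a' \<in> Poly_Mapping.keys f" "b' \<in> Poly_Mapping.keys g" "a + b = a' + b'" for a' b'
  proof -
    have "\<phi> a' + \<phi> b' = \<phi> a + \<phi> b"
      using that(3) by (simp add: hom[symmetric])
    then have "\<phi> a' = \<phi> a \<and> \<phi> b' = \<phi> b"
      using a(2) b(2) that(1,2) by (intro add_eq_add_le_le_imp_eq)
    then show ?thesis
      using inj by (simp add: inj_eq)
  qed
  have "Poly_Mapping.lookup f l * Sum_any (\<lambda>q. Poly_Mapping.lookup g q when a + b = l + q)
      = (Poly_Mapping.lookup f a * Poly_Mapping.lookup g b when l = a)" for l
  proof -
    have "Poly_Mapping.lookup f l * (Poly_Mapping.lookup g q when a + b = l + q)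
        = Poly_Mapping.lookup f l * (Poly_Mapping.lookup g b when l = a \<and> q = b)" for q
      using unique[of l q]
      by (cases "Poly_Mapping.lookup f l = 0 \<or> Poly_Mapping.lookup g q = 0")
        (auto simp: in_keys_iff when_def)
    then have "Poly_Mapping.lookup f l * Sum_any (\<lambda>q. Poly_Mapping.lookup g q when a + b = l + q)
        = Sum_any (\<lambda>q. Poly_Mapping.lookup f l * (Poly_Mapping.lookup g b when l = a) when q = b)"
      by (simp add: Sum_any_right_distrib when_mult mult_when when_when conj_commute)
    then show ?thesis
      by (simp add: when_def)
  qed
  then have "Poly_Mapping.lookup (f * g) (a + b)
      = Poly_Mapping.lookup f a * Poly_Mapping.lookup g b"
    by (simp add: lookup_mult)
  then show ?thesis
    using a(1) b(1) by (auto simp: in_keys_iff)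
qed

lemma laurent_mult_neq_0:
  fixes f g :: "('i::finite \<Rightarrow> int) \<Rightarrow>\<^sub>0 'b::semiring_no_zero_divisors"
  assumes "f \<noteq> 0" "g \<noteq> 0"
  shows "f * g \<noteq> 0"
proof -
  \<comment> \<open>\<open>nat \<Rightarrow>\<^sub>0 int\<close> is linearly ordered (lexicographically), compatibly with addition.\<close>
  define \<phi> :: "('i \<Rightarrow> int) \<Rightarrow> nat \<Rightarrow>\<^sub>0 int"
    where "\<phi> \<mu> = (\<Sum>i\<in>UNIV. Poly_Mapping.single (to_nat i) (\<mu> i))" for \<mu>
  have lookup_\<phi>: "Poly_Mapping.lookup (\<phi> \<mu>) (to_nat i) = \<mu> i" for \<mu> i
  proof -
    have "Poly_Mapping.lookup (\<phi> \<mu>) (to_nat i) = (\<Sum>j\<in>UNIV. (\<mu> j when j = i))"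
      unfolding \<phi>_def lookup_sum by (intro sum.cong refl) (simp add: lookup_single)
    also have "\<dots> = \<mu> i"
      by (simp add: when_def)
    finally show ?thesis .
  qed
  have "inj \<phi>"
  proof (rule injI)
    fix \<mu> \<nu> assume "\<phi> \<mu> = \<phi> \<nu>"
    then show "\<mu> = \<nu>"
      using lookup_\<phi> by (metis ext)
  qed
  moreover have "\<phi> (\<mu> + \<nu>) = \<phi> \<mu> + \<phi> \<nu>" for \<mu> \<nu>
    by (simp add: \<phi>_def single_add sum.distrib)
  ultimately show ?thesis
    using assms by (rule mult_neq_0_if_ordered_embedding)
qed

lemma laurent_mult_eq_0_iff [simp]:
  fixes f g :: "('i::finite \<Rightarrow> int) \<Rightarrow>\<^sub>0 'b::semiring_no_zero_divisors"
  shows "f * g = 0 \<longleftrightarrow> f = 0 \<or> g = 0"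
  using laurent_mult_neq_0[of f g] by auto

lemma laurent_mult_right_cancel:
  fixes a b q :: "('i::finite \<Rightarrow> int) \<Rightarrow>\<^sub>0 'b::ring_no_zero_divisors"
  assumes "a * q = b * q" "q \<noteq> 0"
  shows "a = b"
proof -
  have "(a - b) * q = 0"
    using assms(1) by (simp add: left_diff_distrib)
  then show ?thesis
    using laurent_mult_neq_0[of "a - b" q] assms(2) by auto
qed

lemma monom_mult: "(monom a :: ('v, 'k::field) laurent) * monom b = monom (a + b)"
  by (simp add: monom_def mult_single)

lemma monom_0 [simp]: "(monom 0 :: ('v, 'k::field) laurent) = 1"
  by (simp add: monom_def)

lemma keys_monom [simp]: "Poly_Mapping.keys (monom a :: ('v, 'k::field) laurent) = {a}"
  by (simp add: monom_def)

lemma monom_neq_0 [simp]: "(monom a :: ('v, 'k::field) laurent) \<noteq> 0"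
  using keys_monom[of a] by (metis empty_not_insert keys_eq_empty)

lemma add_in_keys_mult_monom:
  assumes "\<mu> \<in> Poly_Mapping.keys (s :: ('v, 'k::field) laurent)"
  shows "\<mu> + \<nu> \<in> Poly_Mapping.keys (s * monom \<nu>)"
proof -
  have "s = (s * monom \<nu>) * monom (- \<nu>)"
    by (simp add: mult.assoc monom_mult)
  then have "\<mu> \<in> Poly_Mapping.keys ((s * monom \<nu>) * monom (- \<nu>))"
    using assms by simp
  then obtain \<mu>' \<beta> where "\<mu> = \<mu>' + \<beta>" "\<mu>' \<in> Poly_Mapping.keys (s * monom \<nu>)" "\<beta> = - \<nu>"
    using keys_mult[of "s * monom \<nu>" "monom (- \<nu>)"] by auto
  then show ?thesis by simp
qed

section \<open>Divisorial ideals of the monomial algebra of a lattice cone\<close>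

lemma exists_large_multiple:
  fixes x y :: "'c \<Rightarrow> int"
  assumes "finite G" "\<forall>c\<in>G. 1 \<le> y c"
  shows "\<exists>t\<ge>0. \<forall>c\<in>G. a \<le> x c + t * y c"
proof (intro exI conjI ballI)
  let ?t = "(\<Sum>c\<in>G. \<bar>x c\<bar>) + \<bar>a\<bar>"
  show "0 \<le> ?t" by (simp add: sum_nonneg)
  fix c assume c: "c \<in> G"
  have "\<bar>x c\<bar> \<le> (\<Sum>c\<in>G. \<bar>x c\<bar>)"
    using member_le_sum[OF c _ assms(1), of "\<lambda>c. \<bar>x c\<bar>"] by simp
  moreover have "?t \<le> ?t * y c"
    using mult_left_mono[of 1 "y c" ?t] assms(2) c \<open>0 \<le> ?t\<close> by (simp only: mult_1_right)
  ultimately show "a \<le> x c + ?t * y c" by linarith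
qed

lemma mem_frac_monom_sums_of_products:
  assumes "mem_frac (monom \<mu> :: ('v, 'k::field) laurent) I" "mem_frac (monom \<nu>) J"
  shows "mem_frac (monom (\<mu> + \<nu>)) (sums_of_products I J)"
proof -
  obtain x y where x: "x \<in> I" "fst x = monom \<mu> * snd x" and y: "y \<in> J" "fst y = monom \<nu> * snd y"
    using assms by (auto simp: mem_frac_def)
  have "fadd (0, 1) (fmul x y) \<in> sums_of_products I J"
    using x(1) y(1) by (intro sums_of_products.intros)
  moreover have "fst (fadd (0, 1) (fmul x y)) = monom (\<mu> + \<nu>) * snd (fadd (0, 1) (fmul x y))"
    using x(2) y(2) by (simp add: fadd_def fmul_def monom_mult[symmetric] ac_simps)
  ultimately show ?thesis
    unfolding mem_frac_def by blast
qed

locale integral_linear_forms =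
  fixes F :: "'c set" and \<sigma> :: "'c \<Rightarrow> ('v::finite option \<Rightarrow> int) \<Rightarrow> int"
  assumes finite_forms: "finite F"
    and linear_form: "\<sigma> c (\<lambda>x. s * \<mu> x + t * \<nu> x) = s * \<sigma> c \<mu> + t * \<sigma> c \<nu>"
begin

lemma form_add: "\<sigma> c (\<mu> + \<nu>) = \<sigma> c \<mu> + \<sigma> c \<nu>"
  using linear_form[of c 1 \<mu> 1 \<nu>] by (simp add: plus_fun_def)

lemma form_scale: "\<sigma> c (\<lambda>x. t * \<mu> x) = t * \<sigma> c \<mu>"
  using linear_form[of c 0 \<mu> t \<mu>] by simp

definition shifted_cone :: "int \<Rightarrow> ('v option \<Rightarrow> int) set" where
  "shifted_cone a = {\<mu>. \<forall>c\<in>F. a \<le> \<sigma> c \<mu>}"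

lemma zero_in_shifted_cone: "0 \<in> shifted_cone 0"
proof -
  have "\<sigma> c 0 = 0" for c
    using form_scale[of c 0 0] by (simp add: zero_fun_def)
  then show ?thesis by (simp add: shifted_cone_def)
qed

lemma shifted_cone_add:
  "\<mu> \<in> shifted_cone a \<Longrightarrow> \<nu> \<in> shifted_cone b \<Longrightarrow> \<mu> + \<nu> \<in> shifted_cone (a + b)"
  by (auto simp: shifted_cone_def form_add intro: add_mono)

lemma facet_tightI:
  assumes "c \<in> F" "\<sigma> c \<nu>\<^sub>0 = 1" "\<sigma> c w = 0" "\<forall>c'\<in>F - {c}. 1 \<le> \<sigma> c' w"
  shows "\<exists>\<nu>\<in>shifted_cone a. \<sigma> c \<nu> = a"
proof -
  obtain t where t: "\<forall>c'\<in>F - {c}. a \<le> a * \<sigma> c' \<nu>\<^sub>0 + t * \<sigma> c' w"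
    using exists_large_multiple[of "F - {c}" "\<lambda>c'. \<sigma> c' w" a "\<lambda>c'. a * \<sigma> c' \<nu>\<^sub>0"]
      finite_forms assms(4) by auto
  define \<nu> where "\<nu> = (\<lambda>x. a * \<nu>\<^sub>0 x + t * w x)"
  have \<sigma>_\<nu>: "\<sigma> c' \<nu> = a * \<sigma> c' \<nu>\<^sub>0 + t * \<sigma> c' w" for c'
    unfolding \<nu>_def by (rule linear_form)
  have "\<sigma> c \<nu> = a"
    using assms(2,3) by (simp add: \<sigma>_\<nu>)
  moreover have "\<nu> \<in> shifted_cone a"
    using t \<open>\<sigma> c \<nu> = a\<close> by (auto simp: shifted_cone_def \<sigma>_\<nu>)
  ultimately show ?thesis by blast
qed

lemma exists_shift_into_cone:
  assumes "\<forall>c\<in>F. 1 \<le> \<sigma> c \<rho>"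
  shows "\<exists>\<beta>\<in>shifted_cone 0. \<mu> + \<beta> \<in> shifted_cone 0"
proof -
  obtain t where t: "0 \<le> t" "\<forall>c\<in>F. 0 \<le> \<sigma> c \<mu> + t * \<sigma> c \<rho>"
    using exists_large_multiple[of F "\<lambda>c. \<sigma> c \<rho>" 0 "\<lambda>c. \<sigma> c \<mu>"] finite_forms assms by auto
  define \<beta> where "\<beta> = (\<lambda>x. t * \<rho> x)"
  have "\<beta> \<in> shifted_cone 0"
    using t(1) assms by (auto simp: shifted_cone_def \<beta>_def form_scale)
  moreover have "\<mu> + \<beta> \<in> shifted_cone 0"
    using t(2) by (simp add: shifted_cone_def \<beta>_def form_add form_scale)
  ultimately show ?thesis by blast
qed

definition monomial_span :: "int \<Rightarrow> ('v, 'k::field) laurent set" where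
  "monomial_span a = {p. Poly_Mapping.keys p \<subseteq> shifted_cone a}"

lemma monom_in_monomial_span_iff [simp]: "monom \<mu> \<in> monomial_span a \<longleftrightarrow> \<mu> \<in> shifted_cone a"
  by (simp add: monomial_span_def)

lemma zero_in_monomial_span [simp]: "0 \<in> monomial_span a"
  by (simp add: monomial_span_def)

lemma one_in_monomial_span [simp]: "1 \<in> monomial_span 0"
  using monom_in_monomial_span_iff[of 0 0] zero_in_shifted_cone by simp

lemma monomial_span_add: "p \<in> monomial_span a \<Longrightarrow> q \<in> monomial_span a \<Longrightarrow> p + q \<in> monomial_span a"
  unfolding monomial_span_def using keys_add[of p q] by blast

lemma monomial_span_mult:
  assumes "p \<in> monomial_span a" "q \<in> monomial_span b"
  shows "p * q \<in> monomial_span (a + b)"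
proof -
  have "\<mu> + \<nu> \<in> shifted_cone (a + b)" if "\<mu> \<in> Poly_Mapping.keys p" "\<nu> \<in> Poly_Mapping.keys q" for \<mu> \<nu>
    using that assms by (intro shifted_cone_add) (auto simp: monomial_span_def)
  then show ?thesis
    using keys_mult[of p q] by (auto simp: monomial_span_def)
qed

end

(* The forms are the facets of a full-dimensional cone: there is an interior lattice point, and
   no form is redundant, each attaining every value on the corresponding shifted cone.  Then the
   divisorial ideals of the monomial algebra monomial_span 0 are exactly the monomial spans. *)
locale lattice_cone = integral_linear_forms F \<sigma>
  for F :: "'c set" and \<sigma> :: "'c \<Rightarrow> ('v::finite option \<Rightarrow> int) \<Rightarrow> int" +
  assumes forms_nonempty: "F \<noteq> {}"
    and interior_point: "\<exists>\<rho>. \<forall>c\<in>F. 1 \<le> \<sigma> c \<rho>"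
    and facets_tight: "c \<in> F \<Longrightarrow> \<exists>\<nu>\<in>shifted_cone a. \<sigma> c \<nu> = a"
begin

lemma mem_frac_monom_as_frac:
  assumes "\<nu> \<in> shifted_cone a"
  shows "mem_frac (monom \<nu>) (as_frac (monomial_span 0) (monomial_span a))"
proof -
  \<comment> \<open>\<open>T\<^bsup>\<nu>\<^esup> = T\<^bsup>\<nu> + \<beta>\<^esup> / T\<^bsup>\<beta>\<^esup>\<close> with \<open>\<beta>\<close> a large multiple of an interior point\<close>
  obtain \<beta> where \<beta>: "\<beta> \<in> shifted_cone 0" "\<nu> + \<beta> \<in> shifted_cone 0"
    using interior_point exists_shift_into_cone by blast
  have "(monom (\<nu> + \<beta>), monom \<beta>) \<in> as_frac (monomial_span 0) (monomial_span a)"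
    using assms \<beta>
    by (auto simp: as_frac_def QF_def frac_in_def monom_mult intro!: bexI[of _ "monom \<nu>"])
  then show ?thesis
    by (force simp: mem_frac_def monom_mult)
qed

lemma mem_frac_monom_as_frac_iff:
  "mem_frac (monom \<mu> :: ('v, 'k::field) laurent) (as_frac (monomial_span 0) (monomial_span a))
    \<longleftrightarrow> \<mu> \<in> shifted_cone a" (is "?mem \<longleftrightarrow> _")
proof
  assume ?mem
  then obtain x :: "('v, 'k) frac" where x: "x \<in> as_frac (monomial_span 0) (monomial_span a)"
      "fst x = monom \<mu> * snd x"
    unfolding mem_frac_def by blast
  then obtain s where s: "s \<in> monomial_span a" "fst x = s * snd x"
    unfolding as_frac_def frac_in_def by blast
  have "snd x \<noteq> 0"
    using x(1) by (auto simp: as_frac_def QF_def mem_Times_iff)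
  then have "monom \<mu> = s"
    using x(2) s(2) laurent_mult_right_cancel by metis
  with s(1) show "\<mu> \<in> shifted_cone a"
    using monom_in_monomial_span_iff by metis
qed (rule mem_frac_monom_as_frac)

lemma colon_mult_monom:
  fixes S :: "('v, 'k::field) frac set"
  assumes "(p, q) \<in> colon (monomial_span 0) S" "S \<subseteq> QF (monomial_span 0)" "mem_frac (monom \<nu>) S"
  shows "\<exists>r\<in>monomial_span 0. p * monom \<nu> = r * q"
proof -
  obtain y where y: "y \<in> S" "fst y = monom \<nu> * snd y"
    using assms(3) by (auto simp: mem_frac_def)
  have "snd y \<noteq> 0"
    using y(1) assms(2) by (auto simp: QF_def)
  obtain r where r: "r \<in> monomial_span 0" "p * fst y = r * (q * snd y)"
    using assms(1) y(1) by (auto simp: colon_def frac_in_def fmul_def)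
  then have "(p * monom \<nu>) * snd y = (r * q) * snd y"
    using y(2) by (simp add: ac_simps)
  then show ?thesis
    using laurent_mult_right_cancel \<open>snd y \<noteq> 0\<close> r(1) by blast
qed

lemma colon_subset_as_frac:
  fixes S :: "('v, 'k::field) frac set"
  assumes "S \<subseteq> QF (monomial_span 0)"
    and facet_monoms: "\<forall>c\<in>F. \<exists>\<nu>. \<sigma> c \<nu> = a \<and> mem_frac (monom \<nu>) S"
  shows "colon (monomial_span 0) S \<subseteq> as_frac (monomial_span 0) (monomial_span (- a))"
proof
  fix x assume x: "x \<in> colon (monomial_span 0) S"
  obtain p q where pq: "x = (p, q)" by fastforce
  have "x \<in> QF (monomial_span 0)" and "q \<noteq> 0"
    using x pq by (auto simp: colon_def QF_def)
  obtain c\<^sub>0 where "c\<^sub>0 \<in> F" using forms_nonempty by blast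
  then obtain \<nu>\<^sub>0 r\<^sub>0 where r\<^sub>0: "p * monom \<nu>\<^sub>0 = r\<^sub>0 * q"
    using facet_monoms colon_mult_monom[OF x[unfolded pq] assms(1)] by metis
  define s where "s = r\<^sub>0 * monom (- \<nu>\<^sub>0)"
  have ps: "p = s * q"
  proof -
    have "p = p * monom \<nu>\<^sub>0 * monom (- \<nu>\<^sub>0)" by (simp add: mult.assoc monom_mult)
    also have "\<dots> = s * q" using r\<^sub>0 by (simp add: s_def ac_simps)
    finally show ?thesis .
  qed
  have "-a \<le> \<sigma> c \<mu>" if \<mu>: "\<mu> \<in> Poly_Mapping.keys s" and c: "c \<in> F" for \<mu> c
  proof -
    \<comment> \<open>test \<open>s\<close> against a monomial of \<open>S\<close> that is tight at \<open>c\<close>\<close>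
    obtain \<nu> r where \<nu>: "\<sigma> c \<nu> = a" and r: "r \<in> monomial_span 0" "p * monom \<nu> = r * q"
      using facet_monoms c colon_mult_monom[OF x[unfolded pq] assms(1)] by metis
    have "(s * monom \<nu>) * q = r * q" using ps r(2) by (simp add: ac_simps)
    then have "s * monom \<nu> = r" using laurent_mult_right_cancel \<open>q \<noteq> 0\<close> by blast
    then have "\<mu> + \<nu> \<in> shifted_cone 0"
      using add_in_keys_mult_monom[OF \<mu>, of \<nu>] r(1) by (auto simp: monomial_span_def)
    then have "0 \<le> \<sigma> c \<mu> + \<sigma> c \<nu>"
      using c by (simp add: shifted_cone_def form_add)
    then show ?thesis using \<nu> by simp
  qed
  then have "s \<in> monomial_span (- a)"
    by (auto simp: monomial_span_def shifted_cone_def)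
  then show "x \<in> as_frac (monomial_span 0) (monomial_span (- a))"
    using \<open>x \<in> QF (monomial_span 0)\<close> ps pq by (auto simp: as_frac_def frac_in_def)
qed

lemma as_frac_subset_colon:
  fixes S :: "('v, 'k::field) frac set"
  assumes "S \<subseteq> as_frac (monomial_span 0) (monomial_span a)"
  shows "as_frac (monomial_span 0) (monomial_span (- a)) \<subseteq> colon (monomial_span 0) S"
proof
  fix x :: "('v, 'k) frac"
  assume x: "x \<in> as_frac (monomial_span 0) (monomial_span (- a))"
  then obtain s where s: "s \<in> monomial_span (- a)" "fst x = s * snd x"
    by (auto simp: as_frac_def frac_in_def)
  have "frac_in (fmul x y) (monomial_span 0)" if y: "y \<in> S" for y
  proof -
    obtain t where t: "t \<in> monomial_span a" "fst y = t * snd y"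
      using assms y unfolding as_frac_def frac_in_def by blast
    have "s * t \<in> monomial_span 0"
      using monomial_span_mult[OF s(1) t(1)] by simp
    moreover have "fst (fmul x y) = (s * t) * snd (fmul x y)"
      using s(2) t(2) by (simp add: fmul_def ac_simps)
    ultimately show ?thesis by (auto simp: frac_in_def)
  qed
  with x show "x \<in> colon (monomial_span 0) S"
    by (simp add: colon_def as_frac_def)
qed

lemma colon_eq_as_frac:
  fixes S :: "('v, 'k::field) frac set"
  assumes "S \<subseteq> as_frac (monomial_span 0) (monomial_span a)"
    and "\<forall>c\<in>F. \<exists>\<nu>. \<sigma> c \<nu> = a \<and> mem_frac (monom \<nu>) S"
  shows "colon (monomial_span 0) S = as_frac (monomial_span 0) (monomial_span (- a))"
proof (rule equalityI)
  have "S \<subseteq> QF (monomial_span 0)"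
    using assms(1) by (auto simp: as_frac_def)
  then show "colon (monomial_span 0) S \<subseteq> as_frac (monomial_span 0) (monomial_span (- a))"
    using assms(2) by (rule colon_subset_as_frac)
qed (rule as_frac_subset_colon[OF assms(1)])

lemma colon_as_frac_monomial_span:
  "colon (monomial_span 0) (as_frac (monomial_span 0) (monomial_span a) :: ('v, 'k::field) frac set)
    = as_frac (monomial_span 0) (monomial_span (- a))"
proof (rule colon_eq_as_frac)
  show "\<forall>c\<in>F. \<exists>\<nu>. \<sigma> c \<nu> = a \<and>
      mem_frac (monom \<nu>) (as_frac (monomial_span 0) (monomial_span a) :: ('v, 'k) frac set)"
    using facets_tight mem_frac_monom_as_frac by blast
qed simp

lemma fmul_in_QF:
  fixes x y :: "('v, 'k::field) frac"
  shows "x \<in> QF (monomial_span 0) \<Longrightarrow> y \<in> QF (monomial_span 0) \<Longrightarrow> fmul x y \<in> QF (monomial_span 0)"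
  using monomial_span_mult[of _ 0 _ 0] by (auto simp: QF_def fmul_def)

lemma fadd_in_QF:
  fixes x y :: "('v, 'k::field) frac"
  shows "x \<in> QF (monomial_span 0) \<Longrightarrow> y \<in> QF (monomial_span 0) \<Longrightarrow> fadd x y \<in> QF (monomial_span 0)"
  by (auto simp: QF_def fadd_def
      intro!: monomial_span_add monomial_span_mult[of _ 0 _ 0, simplified])

lemma sums_of_products_as_frac:
  assumes "z \<in> sums_of_products (as_frac (monomial_span 0) (monomial_span a))
                                 (as_frac (monomial_span 0) (monomial_span b))"
  shows "z \<in> as_frac (monomial_span 0) (monomial_span (a + b))"
  using assms
proof induction
  case zero
  show ?case
    by (auto simp: as_frac_def QF_def frac_in_def)
next
  case (step s x y)
  obtain t where t: "t \<in> monomial_span (a + b)" "fst s = t * snd s"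
    using step.IH by (auto simp: as_frac_def frac_in_def)
  obtain t\<^sub>x where t\<^sub>x: "t\<^sub>x \<in> monomial_span a" "fst x = t\<^sub>x * snd x"
    using step.hyps(2) by (auto simp: as_frac_def frac_in_def)
  obtain t\<^sub>y where t\<^sub>y: "t\<^sub>y \<in> monomial_span b" "fst y = t\<^sub>y * snd y"
    using step.hyps(3) by (auto simp: as_frac_def frac_in_def)
  have "fadd s (fmul x y) \<in> QF (monomial_span 0)"
    using step by (intro fadd_in_QF fmul_in_QF) (auto simp: as_frac_def)
  moreover have "t + t\<^sub>x * t\<^sub>y \<in> monomial_span (a + b)"
    using t(1) monomial_span_mult[OF t\<^sub>x(1) t\<^sub>y(1)] by (rule monomial_span_add)
  moreover have "fst (fadd s (fmul x y)) = (t + t\<^sub>x * t\<^sub>y) * snd (fadd s (fmul x y))"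
    using t(2) t\<^sub>x(2) t\<^sub>y(2) by (simp add: fadd_def fmul_def algebra_simps)
  ultimately show ?case
    by (auto simp: as_frac_def frac_in_def)
qed

lemma dmul_as_frac:
  "dmul (monomial_span 0) (as_frac (monomial_span 0) (monomial_span a))
      (as_frac (monomial_span 0) (monomial_span b))
    = (as_frac (monomial_span 0) (monomial_span (a + b)) :: ('v, 'k::field) frac set)"
proof -
  let ?P = "sums_of_products (as_frac (monomial_span 0) (monomial_span a))
      (as_frac (monomial_span 0) (monomial_span b)) :: ('v, 'k) frac set"
  have "colon (monomial_span 0) ?P = as_frac (monomial_span 0) (monomial_span (- (a + b)))"
  proof (rule colon_eq_as_frac)
    show "?P \<subseteq> as_frac (monomial_span 0) (monomial_span (a + b))"
      using sums_of_products_as_frac by blast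
    show "\<forall>c\<in>F. \<exists>\<nu>. \<sigma> c \<nu> = a + b \<and> mem_frac (monom \<nu>) ?P"
    proof
      fix c assume "c \<in> F"
      then obtain \<nu>\<^sub>a \<nu>\<^sub>b where "\<nu>\<^sub>a \<in> shifted_cone a" "\<sigma> c \<nu>\<^sub>a = a" "\<nu>\<^sub>b \<in> shifted_cone b" "\<sigma> c \<nu>\<^sub>b = b"
        using facets_tight by metis
      then show "\<exists>\<nu>. \<sigma> c \<nu> = a + b \<and> mem_frac (monom \<nu>) ?P"
        by (intro exI[of _ "\<nu>\<^sub>a + \<nu>\<^sub>b"])
          (simp add: form_add mem_frac_monom_sums_of_products mem_frac_monom_as_frac)
    qed
  qed
  then show ?thesis
    unfolding dmul_def by (simp only: colon_as_frac_monomial_span minus_minus)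
qed

lemma funpow_dmul_as_frac:
  "(dmul (monomial_span 0) (as_frac (monomial_span 0) (monomial_span a)) ^^ k)
      (as_frac (monomial_span 0) (monomial_span 0))
    = (as_frac (monomial_span 0) (monomial_span (int k * a)) :: ('v, 'k::field) frac set)"
proof (induction k)
  case (Suc k)
  then show ?case
    by (simp add: dmul_as_frac algebra_simps)
qed simp

lemma dpow_as_frac:
  "dpow (monomial_span 0) (as_frac (monomial_span 0) (monomial_span 1)) n
    = (as_frac (monomial_span 0) (monomial_span n) :: ('v, 'k::field) frac set)"
proof (cases "0 \<le> n")
  case True
  then show ?thesis
    using funpow_dmul_as_frac[where a = 1 and k = "nat n"] by (simp add: dpow_def)
next
  case False
  then show ?thesis
    using funpow_dmul_as_frac[where a = "- 1" and k = "nat (- n)"]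
    by (simp add: dpow_def colon_as_frac_monomial_span)
qed

lemma mem_frac_monom_dpow_iff:
  "mem_frac (monom \<mu> :: ('v, 'k::field) laurent)
      (dpow (monomial_span 0) (as_frac (monomial_span 0) (monomial_span 1)) n)
    \<longleftrightarrow> \<mu> \<in> shifted_cone n"
  by (simp add: dpow_as_frac mem_frac_monom_as_frac_iff)

end

section \<open>Cliques and chordless cycles\<close>

lemma simple_graph_sym: "simple_graph E \<Longrightarrow> E x y \<Longrightarrow> E y x"
  by (simp add: simple_graph_def)

lemma simple_graph_irrefl: "simple_graph E \<Longrightarrow> \<not> E x x"
  by (simp add: simple_graph_def)

lemma clique_subset_maximal_clique:
  fixes E :: "'v::finite \<Rightarrow> 'v \<Rightarrow> bool"
  assumes "is_clique E K\<^sub>0"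
  obtains K where "is_maximal_clique E K" "K\<^sub>0 \<subseteq> K"
proof -
  define P where "P = (\<lambda>K. is_clique E K \<and> K\<^sub>0 \<subseteq> K)"
  have "P K\<^sub>0" using assms by (simp add: P_def)
  moreover have "\<forall>K. P K \<longrightarrow> card K < Suc (card (UNIV :: 'v set))"
    by (simp add: card_mono le_imp_less_Suc)
  ultimately obtain K where K: "P K" "\<And>K'. P K' \<Longrightarrow> card K' \<le> card K"
    using ex_has_greatest_nat[of P K\<^sub>0 card "Suc (card (UNIV :: 'v set))"] by blast
  have "is_maximal_clique E K"
    unfolding is_maximal_clique_def
  proof (intro conjI allI impI)
    show "is_clique E K" using K(1) by (simp add: P_def)
  next
    fix K' assume K': "is_clique E K' \<and> K \<subseteq> K'"
    then have "card K' \<le> card K" using K by (auto simp: P_def)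
    then show "K' = K" using K' card_seteq[of K' K] by simp
  qed
  then show ?thesis using K(1) that by (auto simp: P_def)
qed

lemma maximal_clique_nonempty: "is_maximal_clique E K \<Longrightarrow> K \<noteq> {}"
  unfolding is_maximal_clique_def is_clique_def by blast

lemma is_clique_edge: "simple_graph E \<Longrightarrow> E x y \<Longrightarrow> is_clique E {x, y}"
  unfolding is_clique_def simple_graph_def by auto

lemma not_three_pairwise_cyclically_adjacent:
  fixes i j l n :: nat
  assumes "i < n" "j < n" "l < n" "i \<noteq> j" "i \<noteq> l" "j \<noteq> l" "4 \<le> n"
    and "j = Suc i mod n \<or> i = Suc j mod n"
    and "l = Suc i mod n \<or> i = Suc l mod n"
    and "l = Suc j mod n \<or> j = Suc l mod n"
  shows False
  using assms by (simp add: mod_Suc split: if_splits) linarith+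

lemma card_clique_inter_chordless_cycle:
  assumes "is_clique E K" "chordless E xs" "4 \<le> length xs"
  shows "card (K \<inter> set xs) \<le> 2"
proof (rule ccontr)
  assume "\<not> card (K \<inter> set xs) \<le> 2"
  then have "3 \<le> card (K \<inter> set xs)" by simp
  then obtain T where "T \<subseteq> K \<inter> set xs" "card T = 3"
    by (rule obtain_subset_with_card_n)
  then obtain a b c where abc: "{a, b, c} \<subseteq> K \<inter> set xs" "a \<noteq> b" "a \<noteq> c" "b \<noteq> c"
    unfolding card_3_iff by blast
  obtain i where i: "i < length xs" "xs ! i = a"
    using abc(1) by (auto simp: in_set_conv_nth)
  obtain j where j: "j < length xs" "xs ! j = b"
    using abc(1) by (auto simp: in_set_conv_nth)
  obtain l where l: "l < length xs" "xs ! l = c"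
    using abc(1) by (auto simp: in_set_conv_nth)
  have "E a b" "E a c" "E b c"
    using assms(1) abc unfolding is_clique_def by auto
  then have adj: "j = Suc i mod length xs \<or> i = Suc j mod length xs"
    "l = Suc i mod length xs \<or> i = Suc l mod length xs"
    "l = Suc j mod length xs \<or> j = Suc l mod length xs"
    using assms(2) i j l unfolding chordless_def by auto
  have "i \<noteq> j" "i \<noteq> l" "j \<noteq> l"
    using i j l abc by auto
  then show False
    using not_three_pairwise_cyclically_adjacent[OF i(1) j(1) l(1) _ _ _ assms(3) adj] by blast
qed

lemma cycle_two_neighbours:
  assumes sg: "simple_graph E" and cy: "is_cycle E ys" and v: "v \<in> set ys"
  obtains u w where "u \<in> set ys" "w \<in> set ys" "u \<noteq> w" "E v u" "E v w"
proof -
  define m where "m = length ys"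
  have m: "3 \<le> m" "distinct ys" and edge: "\<And>i. i < m \<Longrightarrow> E (ys ! i) (ys ! (Suc i mod m))"
    using cy by (auto simp: is_cycle_def m_def)
  obtain j where j: "j < m" "ys ! j = v"
    using v by (auto simp: in_set_conv_nth m_def)
  define jn where "jn = Suc j mod m"
  define jp where "jp = (if j = 0 then m - 1 else j - 1)"
  have jn: "jn < m"
    using m(1) by (simp add: jn_def)
  have jp: "jp < m" "Suc jp mod m = j"
    using j m by (auto simp: jp_def)
  have "jn \<noteq> jp"
    using j m by (auto simp: jn_def jp_def mod_Suc split: if_splits)
  then have "ys ! jn \<noteq> ys ! jp"
    using m(2) jn jp by (simp add: m_def nth_eq_iff_index_eq)
  moreover have "E v (ys ! jn)"
    using edge j by (auto simp: jn_def)
  moreover have "E v (ys ! jp)"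
    using edge[OF jp(1)] jp j simple_graph_sym[OF sg] by simp
  moreover have "ys ! jn \<in> set ys" "ys ! jp \<in> set ys"
    using jn jp(1) by (simp_all add: m_def)
  ultimately show ?thesis
    using that by blast
qed

lemma chordless_cycle_successor_mem:
  assumes sg: "simple_graph E" and cyx: "is_cycle E xs" and ch: "chordless E xs"
    and cyy: "is_cycle E ys" and sub: "set ys \<subseteq> set xs"
    and i: "i < length xs" "xs ! i \<in> set ys"
  shows "xs ! (Suc i mod length xs) \<in> set ys"
proof -
  define n where "n = length xs"
  obtain u w where uw: "u \<in> set ys" "w \<in> set ys" "u \<noteq> w" "E (xs ! i) u" "E (xs ! i) w"
    using cycle_two_neighbours[OF sg cyy i(2)] by blast
  obtain k\<^sub>1 where k\<^sub>1: "k\<^sub>1 < n" "xs ! k\<^sub>1 = u"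
    using uw(1) sub by (metis in_set_conv_nth n_def subsetD)
  obtain k\<^sub>2 where k\<^sub>2: "k\<^sub>2 < n" "xs ! k\<^sub>2 = w"
    using uw(2) sub by (metis in_set_conv_nth n_def subsetD)
  have "k\<^sub>1 = Suc i mod n \<or> i = Suc k\<^sub>1 mod n" "k\<^sub>2 = Suc i mod n \<or> i = Suc k\<^sub>2 mod n"
    using ch i(1) k\<^sub>1 k\<^sub>2 uw(4,5) unfolding chordless_def n_def by auto
  moreover have "Suc k\<^sub>1 mod n \<noteq> Suc k\<^sub>2 mod n"
    using k\<^sub>1 k\<^sub>2 uw(3) by (auto simp: mod_Suc split: if_splits)
  ultimately have "k\<^sub>1 = Suc i mod n \<or> k\<^sub>2 = Suc i mod n"
    by metis
  then show ?thesis
    using uw k\<^sub>1 k\<^sub>2 by (auto simp: n_def)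
qed

lemma chordless_cycle_subset_eq:
  assumes sg: "simple_graph E" and cyx: "is_cycle E xs" and ch: "chordless E xs"
    and cyy: "is_cycle E ys" and sub: "set ys \<subseteq> set xs"
  shows "set ys = set xs"
proof -
  define n where "n = length xs"
  have "ys \<noteq> []"
    using cyy by (auto simp: is_cycle_def)
  then obtain i\<^sub>0 where i\<^sub>0: "i\<^sub>0 < n" "xs ! i\<^sub>0 \<in> set ys"
    using sub by (metis in_set_conv_nth list.set_sel(1) n_def subsetD)
  have all: "xs ! ((i\<^sub>0 + k) mod n) \<in> set ys" for k
  proof (induction k)
    case (Suc k)
    have "(i\<^sub>0 + k) mod n < n"
      using i\<^sub>0(1) by simp
    then have "xs ! (Suc ((i\<^sub>0 + k) mod n) mod n) \<in> set ys"
      using chordless_cycle_successor_mem[OF sg cyx ch cyy sub _ Suc.IH] by (simp add: n_def)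
    moreover have "(i\<^sub>0 + Suc k) mod n = Suc ((i\<^sub>0 + k) mod n) mod n"
      by (simp add: mod_Suc_eq)
    ultimately show ?case
      by simp
  qed (use i\<^sub>0 in simp)
  have "set xs \<subseteq> set ys"
  proof
    fix v assume "v \<in> set xs"
    then obtain i where i: "i < n" "xs ! i = v"
      by (auto simp: in_set_conv_nth n_def)
    have "(i\<^sub>0 + (i + n - i\<^sub>0)) mod n = i"
      using i i\<^sub>0 by simp
    then show "v \<in> set ys"
      using all[of "i + n - i\<^sub>0"] i by simp
  qed
  then show ?thesis
    using sub by blast
qed

section \<open>Odd cycle inequalities from clique and odd hole inequalities\<close>

lemma is_cycle_edge: "is_cycle E ys \<Longrightarrow> Suc k < length ys \<Longrightarrow> E (ys ! k) (ys ! Suc k)"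
  unfolding is_cycle_def by (metis Suc_lessD mod_less)

lemma is_cycle_edge_last:
  assumes "is_cycle E ys"
  shows "E (ys ! (length ys - 1)) (ys ! 0)"
proof -
  have "length ys - 1 < length ys" "Suc (length ys - 1) = length ys"
    using assms by (auto simp: is_cycle_def)
  then show ?thesis
    using assms unfolding is_cycle_def by (metis mod_self)
qed

lemma sum_list_even_path_le:
  fixes f :: "'v \<Rightarrow> real"
  assumes edge: "\<And>x y. E x y \<Longrightarrow> f x + f y \<le> 1"
  shows "(\<forall>k. Suc k < length zs \<longrightarrow> E (zs ! k) (zs ! Suc k)) \<Longrightarrow> even (length zs)
    \<Longrightarrow> sum_list (map f zs) \<le> real (length zs) / 2"
proof (induction zs rule: induct_list012)
  case (3 x y zs)
  have "E x y"
    using "3.prems"(1) by force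
  moreover have "\<forall>k. Suc k < length zs \<longrightarrow> E (zs ! k) (zs ! Suc k)"
    using "3.prems"(1) by (metis Suc_less_eq length_Cons nth_Cons_Suc)
  ultimately show ?case
    using "3.IH"(1) "3.prems"(2) edge[of x y] by simp
qed simp_all

lemma is_cycle_take_chord:
  assumes sg: "simple_graph E" and cy: "is_cycle E ys"
    and chord: "E (ys ! 0) (ys ! d)" and d: "2 \<le> d" "d < length ys"
  shows "is_cycle E (take (Suc d) ys)"
  unfolding is_cycle_def
proof (intro conjI allI impI)
  show "3 \<le> length (take (Suc d) ys)" "distinct (take (Suc d) ys)"
    using cy d by (simp_all add: is_cycle_def)
next
  fix k assume k: "k < length (take (Suc d) ys)"
  show "E (take (Suc d) ys ! k) (take (Suc d) ys ! (Suc k mod length (take (Suc d) ys)))"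
  proof (cases "k < d")
    case True
    then show ?thesis
      using is_cycle_edge[OF cy, of k] d by simp
  next
    case False
    then have "k = d"
      using k d by simp
    then show ?thesis
      using d simple_graph_sym[OF sg chord] by simp
  qed
qed

lemma is_cycle_cons_drop_chord:
  assumes cy: "is_cycle E ys" and chord: "E (ys ! 0) (ys ! d)" and d: "2 \<le> d" "d + 2 \<le> length ys"
  shows "is_cycle E (ys ! 0 # drop d ys)"
  unfolding is_cycle_def
proof (intro conjI allI impI)
  let ?B = "ys ! 0 # drop d ys"
  have dys: "distinct ys"
    using cy by (simp add: is_cycle_def)
  have "ys ! 0 \<notin> set (drop d ys)"
  proof
    assume "ys ! 0 \<in> set (drop d ys)"
    then obtain i where "i < length ys - d" "ys ! (d + i) = ys ! 0"
      by (auto simp: in_set_conv_nth)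
    moreover have "d + i < length ys" "0 < length ys"
      using \<open>i < length ys - d\<close> d by auto
    ultimately have "d + i = 0"
      using nth_eq_iff_index_eq[OF dys] by metis
    then show False
      using d by simp
  qed
  then show "distinct ?B"
    using dys by simp
  show "3 \<le> length ?B"
    using d by simp
  fix k assume k: "k < length ?B"
  show "E (?B ! k) (?B ! (Suc k mod length ?B))"
  proof (cases k)
    case 0
    then show ?thesis
      using chord d by simp
  next
    case (Suc k')
    show ?thesis
    proof (cases "Suc k < length ?B")
      case True
      then show ?thesis
        using is_cycle_edge[OF cy, of "d + k'"] Suc d by simp
    next
      case False
      then have "Suc k = length ?B"
        using k by simp
      moreover from this have "d + k' = length ys - 1"
        using Suc d by simp
      ultimately show ?thesis
        using is_cycle_edge_last[OF cy] Suc d by simp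
    qed
  qed
qed

lemma sum_list_cycle_chord_le:
  fixes f :: "'v::finite \<Rightarrow> real"
  assumes sg: "simple_graph E" and cy: "is_cycle E ys" and odd: "odd (length ys)"
    and chord: "E (ys ! 0) (ys ! d)" and d: "2 \<le> d" "d + 2 \<le> length ys"
    and edge: "\<And>x y. E x y \<Longrightarrow> f x + f y \<le> 1"
    and shorter: "\<And>zs. is_cycle E zs \<Longrightarrow> odd (length zs) \<Longrightarrow> length zs < length ys
        \<Longrightarrow> sum_list (map f zs) \<le> (real (length zs) - 1) / 2"
  shows "sum_list (map f ys) \<le> (real (length ys) - 1) / 2"
proof (cases "even d")
  \<comment> \<open>either way the chord cuts off a shorter odd cycle and leaves a path of even length\<close>
  case True
  let ?A = "take (Suc d) ys" and ?R = "drop (Suc d) ys"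
  have "sum_list (map f ?A) \<le> (real (length ?A) - 1) / 2"
    using is_cycle_take_chord[OF sg cy chord] True d by (intro shorter) auto
  moreover have "sum_list (map f ?R) \<le> real (length ?R) / 2"
  proof (rule sum_list_even_path_le[OF edge])
    show "\<forall>k. Suc k < length ?R \<longrightarrow> E (?R ! k) (?R ! Suc k)"
      using is_cycle_edge[OF cy] d by simp
    show "even (length ?R)"
      using odd True by simp
  qed
  moreover have "sum_list (map f (?A @ ?R)) = sum_list (map f ?A) + sum_list (map f ?R)"
    by (simp only: map_append sum_list_append)
  ultimately show ?thesis
    using d by (simp add: field_simps)
next
  case False
  let ?B = "ys ! 0 # drop d ys" and ?M = "take (d - 1) (drop 1 ys)"
  have "sum_list (map f ?B) \<le> (real (length ?B) - 1) / 2"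
    using is_cycle_cons_drop_chord[OF cy chord d] odd False d by (intro shorter) auto
  moreover have "sum_list (map f ?M) \<le> real (length ?M) / 2"
  proof (rule sum_list_even_path_le[OF edge])
    show "\<forall>k. Suc k < length ?M \<longrightarrow> E (?M ! k) (?M ! Suc k)"
      using is_cycle_edge[OF cy] d by simp
    show "even (length ?M)"
      using False d by simp
  qed
  moreover have "sum_list (map f ys) = sum_list (map f (ys ! 0 # ?M @ drop d ys))"
  proof -
    have "drop 1 ys = ?M @ drop d ys"
      using append_take_drop_id[of "d - 1" "drop 1 ys"] d by simp
    moreover have "ys = ys ! 0 # drop 1 ys"
      using d by (cases ys) auto
    ultimately show ?thesis
      by simp
  qed
  ultimately show ?thesis
    using d by (simp add: field_simps)
qed

lemma is_cycle_rotate: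
  assumes cy: "is_cycle E xs"
  shows "is_cycle E (rotate i xs)"
  unfolding is_cycle_def
proof (intro conjI allI impI)
  show "3 \<le> length (rotate i xs)" "distinct (rotate i xs)"
    using cy by (simp_all add: is_cycle_def)
next
  fix k assume k: "k < length (rotate i xs)"
  define n where "n = length xs"
  have n: "0 < n" "k < n"
    using k by (auto simp: n_def)
  have "E (xs ! ((k + i) mod n)) (xs ! (Suc ((k + i) mod n) mod n))"
    using cy n(1) unfolding is_cycle_def n_def by simp
  moreover have "(Suc k mod n + i) mod n = Suc ((k + i) mod n) mod n"
    by (simp add: mod_add_left_eq mod_Suc_eq)
  ultimately show "E (rotate i xs ! k) (rotate i xs ! (Suc k mod length (rotate i xs)))"
    using n by (simp add: nth_rotate n_def add.commute)
qed

lemma cycle_chord_at_head: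
  assumes sg: "simple_graph E" and cy: "is_cycle E xs" and "\<not> chordless E xs"
  obtains ys d where "is_cycle E ys" "set ys = set xs" "length ys = length xs"
    "E (ys ! 0) (ys ! d)" "2 \<le> d" "d + 2 \<le> length xs"
proof -
  define n where "n = length xs"
  obtain i j where ij: "i < n" "j < n" "E (xs ! i) (xs ! j)" "j \<noteq> Suc i mod n" "i \<noteq> Suc j mod n"
    using assms(3) unfolding chordless_def n_def by blast
  define ys where "ys = rotate i xs"
  define d where "d = (j + n - i) mod n"
  have "d < n"
    using ij(1) by (simp add: d_def)
  have nth_ys: "ys ! k = xs ! ((k + i) mod n)" if "k < n" for k
    using that by (simp add: ys_def nth_rotate n_def add.commute)
  have dj: "(d + i) mod n = j"
  proof -
    have "(d + i) mod n = (j + n - i + i) mod n"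
      by (simp add: d_def mod_add_left_eq)
    then show ?thesis
      using ij(1,2) by simp
  qed
  have "ys ! 0 = xs ! i" "ys ! d = xs ! j"
    using nth_ys[of 0] nth_ys[OF \<open>d < n\<close>] ij(1) dj by simp_all
  then have chord: "E (ys ! 0) (ys ! d)"
    using ij(3) by simp
  have "d \<noteq> 0"
  proof
    assume "d = 0"
    then have "j = i"
      using dj ij(1) by simp
    then show False
      using ij(3) simple_graph_irrefl[OF sg] by simp
  qed
  moreover have "d \<noteq> 1"
    using dj ij(4) by auto
  moreover have "d \<noteq> n - 1"
  proof
    assume "d = n - 1"
    then have "Suc j mod n = Suc (n - 1 + i) mod n"
      using dj mod_Suc_eq[of "n - 1 + i" n] by simp
    also have "Suc (n - 1 + i) = n + i"
      using ij(1) by simp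
    finally show False
      using ij(1,5) by simp
  qed
  ultimately have "2 \<le> d" "d + 2 \<le> n"
    using \<open>d < n\<close> by linarith+
  moreover have "is_cycle E ys"
    using is_cycle_rotate[OF cy] by (simp add: ys_def)
  ultimately show ?thesis
    using that chord by (simp add: ys_def n_def)
qed

lemma triangle_is_clique:
  assumes sg: "simple_graph E" and cy: "is_cycle E xs" and len: "length xs = 3"
  shows "is_clique E (set xs)"
proof -
  obtain a b c where xs: "xs = [a, b, c]"
    using len by (metis (no_types) length_0_conv length_Suc_conv numeral_3_eq_3)
  have "E a b" "E b c" "E c a"
    using cy unfolding is_cycle_def xs by (auto dest: spec[of _ 0] spec[of _ 1] spec[of _ 2])
  then show ?thesis
    using simple_graph_sym[OF sg] by (auto simp: is_clique_def xs)
qed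

lemma sum_list_odd_cycle_le:
  fixes f :: "'v::finite \<Rightarrow> real"
  assumes sg: "simple_graph E"
    and clique: "\<And>K. is_clique E K \<Longrightarrow> sum f K \<le> 1"
    and hole: "\<And>xs. is_cycle E xs \<Longrightarrow> chordless E xs \<Longrightarrow> odd (length xs) \<Longrightarrow> 5 \<le> length xs
        \<Longrightarrow> sum_list (map f xs) \<le> (real (length xs) - 1) / 2"
  shows "is_cycle E xs \<Longrightarrow> odd (length xs) \<Longrightarrow> sum_list (map f xs) \<le> (real (length xs) - 1) / 2"
proof (induction "length xs" arbitrary: xs rule: less_induct)
  case less
  have edge: "f x + f y \<le> 1" if "E x y" for x y
    using clique[OF is_clique_edge[OF sg that]] simple_graph_irrefl[OF sg, of x] that
    by (cases "x = y") simp_all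
  have dx: "distinct xs" and "3 \<le> length xs"
    using less.prems(1) by (simp_all add: is_cycle_def)
  then have "length xs = 3 \<or> 5 \<le> length xs"
    using less.prems(2) by presburger
  then consider "length xs = 3" | "chordless E xs" "5 \<le> length xs" | "\<not> chordless E xs"
    by blast
  then show ?case
  proof cases
    case 1
    then have "sum f (set xs) \<le> 1"
      using triangle_is_clique[OF sg less.prems(1)] clique by blast
    then show ?thesis
      using 1 dx by (simp add: sum_list_distinct_conv_sum_set)
  next
    case 2
    then show ?thesis
      using hole less.prems by blast
  next
    case 3
    then obtain ys d where ys: "is_cycle E ys" "set ys = set xs" "length ys = length xs"
        "E (ys ! 0) (ys ! d)" "2 \<le> d" "d + 2 \<le> length xs"
      using cycle_chord_at_head[OF sg less.prems(1)] by blast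
    have "sum_list (map f ys) = sum_list (map f xs)"
      using ys(1,2) dx by (simp add: is_cycle_def sum_list_distinct_conv_sum_set)
    moreover have "sum_list (map f ys) \<le> (real (length ys) - 1) / 2"
      using ys less.prems(2) by (intro sum_list_cycle_chord_le[OF sg ys(1)] less.hyps edge) simp_all
    ultimately show ?thesis
      using ys(3) by simp
  qed
qed

section \<open>The facets of HSTAB(G)\<close>

datatype 'v hstab_ineq = Nonneg_ineq 'v | Clique_ineq "'v set" | Hole_ineq "'v set"

fun is_hstab_facet :: "('v \<Rightarrow> 'v \<Rightarrow> bool) \<Rightarrow> 'v hstab_ineq \<Rightarrow> bool" where
  "is_hstab_facet E (Nonneg_ineq z) \<longleftrightarrow> True"
| "is_hstab_facet E (Clique_ineq K) \<longleftrightarrow> is_maximal_clique E K"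
| "is_hstab_facet E (Hole_ineq C) \<longleftrightarrow> is_chordless_odd_cycle_ge5 E C"

(* The stability number (#C - 1)/2 of an odd cycle C; the division is exact as #C is odd. *)
definition cycle_alpha :: "'v set \<Rightarrow> int" where
  "cycle_alpha C = int ((card C - 1) div 2)"

(* Homogenised slack: for f(-\<infinity>) > 0 it is f(-\<infinity>) times hstab_slack c (restrV f),
   see hstab_slack_restrV below. *)
fun hstab_form :: "'v hstab_ineq \<Rightarrow> ('v option \<Rightarrow> int) \<Rightarrow> int" where
  "hstab_form (Nonneg_ineq z) \<mu> = \<mu> (Some z)"
| "hstab_form (Clique_ineq K) \<mu> = \<mu> None - (\<Sum>x\<in>K. \<mu> (Some x))"
| "hstab_form (Hole_ineq C) \<mu> = \<mu> None * cycle_alpha C - (\<Sum>x\<in>C. \<mu> (Some x))"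

fun hstab_slack :: "'v hstab_ineq \<Rightarrow> real ^ 'v \<Rightarrow> real" where
  "hstab_slack (Nonneg_ineq z) p = p $ z"
| "hstab_slack (Clique_ineq K) p = 1 - (\<Sum>x\<in>K. p $ x)"
| "hstab_slack (Hole_ineq C) p = real_of_int (cycle_alpha C) - (\<Sum>x\<in>C. p $ x)"

lemma chordless_odd_cycle_ge5_card:
  assumes "is_chordless_odd_cycle_ge5 E C"
  shows "odd (card C)" "5 \<le> card C"
proof -
  obtain xs where xs: "is_cycle E xs" "set xs = C" "odd (length xs)" "5 \<le> length xs"
    using assms unfolding is_chordless_odd_cycle_ge5_def by blast
  then have "card C = length xs"
    using distinct_card[of xs] by (simp add: is_cycle_def)
  then show "odd (card C)" "5 \<le> card C"
    using xs by simp_all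
qed

lemma cycle_alpha_eq:
  assumes "odd (card C)"
  shows "2 * cycle_alpha C + 1 = int (card C)"
    and "real_of_int (cycle_alpha C) = (real (card C) - 1) / 2"
proof -
  obtain m where "card C = 2 * m + 1"
    using assms oddE by blast
  then show "2 * cycle_alpha C + 1 = int (card C)"
    and "real_of_int (cycle_alpha C) = (real (card C) - 1) / 2"
    by (simp_all add: cycle_alpha_def)
qed

lemma finite_hstab_ineq: "finite (UNIV :: 'v::finite hstab_ineq set)"
proof -
  have "UNIV = range Nonneg_ineq \<union> range Clique_ineq \<union> range (Hole_ineq :: 'v set \<Rightarrow> _)"
  proof (intro set_eqI iffI)
    fix c :: "'v hstab_ineq"
    show "c \<in> range Nonneg_ineq \<union> range Clique_ineq \<union> range Hole_ineq"
      by (cases c) simp_all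
  qed simp
  then show ?thesis
    by (metis finite_UnI finite_imageI finite)
qed

interpretation hstab: integral_linear_forms "{c. is_hstab_facet E c}" hstab_form
  for E :: "'v::finite \<Rightarrow> 'v \<Rightarrow> bool"
proof
  show "finite {c :: 'v hstab_ineq. is_hstab_facet E c}"
    using finite_hstab_ineq by (rule finite_subset[rotated]) simp
  show "hstab_form c (\<lambda>x. s * \<mu> x + t * \<nu> x) = s * hstab_form c \<mu> + t * hstab_form c \<nu>"
    for c :: "'v hstab_ineq" and s t \<mu> \<nu>
    by (cases c) (simp_all add: sum.distrib sum_distrib_left algebra_simps)
qed

abbreviation hstab_cone :: "('v::finite \<Rightarrow> 'v \<Rightarrow> bool) \<Rightarrow> int \<Rightarrow> ('v option \<Rightarrow> int) set" where
  "hstab_cone E \<equiv> integral_linear_forms.shifted_cone {c. is_hstab_facet E c} hstab_form"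

abbreviation hstab_span :: "('v::finite \<Rightarrow> 'v \<Rightarrow> bool) \<Rightarrow> int \<Rightarrow> ('v, 'k::field) laurent set" where
  "hstab_span E \<equiv> integral_linear_forms.monomial_span {c. is_hstab_facet E c} hstab_form"

lemma all_hstab_facets_iff:
  "(\<forall>c. is_hstab_facet E c \<longrightarrow> P c) \<longleftrightarrow>
     (\<forall>z. P (Nonneg_ineq z)) \<and> (\<forall>K. is_maximal_clique E K \<longrightarrow> P (Clique_ineq K))
     \<and> (\<forall>C. is_chordless_odd_cycle_ge5 E C \<longrightarrow> P (Hole_ineq C))" (is "?all \<longleftrightarrow> ?each")
proof
  assume ?each
  show ?all
  proof (intro allI impI)
    fix c assume "is_hstab_facet E c"
    then show "P c"
      using \<open>?each\<close> by (cases c) simp_all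
  qed
qed (metis is_hstab_facet.simps)

lemma mem_hstab_cone_iff:
  "\<mu> \<in> hstab_cone E a \<longleftrightarrow>
     (\<forall>z. a \<le> \<mu> (Some z)) \<and> (\<forall>K. is_maximal_clique E K \<longrightarrow> a \<le> hstab_form (Clique_ineq K) \<mu>)
     \<and> (\<forall>C. is_chordless_odd_cycle_ge5 E C \<longrightarrow> a \<le> hstab_form (Hole_ineq C) \<mu>)"
  by (simp only: hstab.shifted_cone_def mem_Collect_eq Ball_def all_hstab_facets_iff
      hstab_form.simps(1))

lemma hole_form_ge_iff:
  assumes "is_chordless_odd_cycle_ge5 E C"
  shows "n \<le> hstab_form (Hole_ineq C) \<mu> \<longleftrightarrow>
    real_of_int (\<Sum>x\<in>C. \<mu> (Some x)) \<le> real_of_int (\<mu> None) * (real (card C) - 1) / 2 - real_of_int n"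
proof -
  have "n \<le> hstab_form (Hole_ineq C) \<mu> \<longleftrightarrow> real_of_int n \<le> real_of_int (hstab_form (Hole_ineq C) \<mu>)"
    by (simp only: of_int_le_iff)
  also have "real_of_int (hstab_form (Hole_ineq C) \<mu>)
      = real_of_int (\<mu> None) * ((real (card C) - 1) / 2) - real_of_int (\<Sum>x\<in>C. \<mu> (Some x))"
    using cycle_alpha_eq(2)[OF chordless_odd_cycle_ge5_card(1)[OF assms]] by simp
  finally show ?thesis
    by (simp add: algebra_simps)
qed

lemma hstab_cone_eq_U_set: "hstab_cone E n = U_set E n"
proof (intro set_eqI)
  fix \<mu>
  have "(\<forall>C. is_chordless_odd_cycle_ge5 E C \<longrightarrow> n \<le> hstab_form (Hole_ineq C) \<mu>) \<longleftrightarrow>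
      (\<forall>C. is_chordless_odd_cycle_ge5 E C \<longrightarrow> real_of_int (\<Sum>x\<in>C. \<mu> (Some x))
          \<le> real_of_int (\<mu> None) * (real (card C) - 1) / 2 - real_of_int n)"
    using hole_form_ge_iff by blast
  then show "\<mu> \<in> hstab_cone E n \<longleftrightarrow> \<mu> \<in> U_set E n"
    unfolding mem_hstab_cone_iff U_set_def mem_Collect_eq by (simp add: algebra_simps)
qed

lemma odd_cycle_ineq_if_clique_and_hole_ineqs:
  fixes p :: "real ^ 'v::finite"
  assumes sg: "simple_graph E"
    and clique: "\<And>K. is_clique E K \<Longrightarrow> (\<Sum>x\<in>K. p $ x) \<le> 1"
    and hole: "\<And>C. is_chordless_odd_cycle_ge5 E C \<Longrightarrow> (\<Sum>x\<in>C. p $ x) \<le> (real (card C) - 1) / 2"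
    and C: "is_odd_cycle E C"
  shows "(\<Sum>x\<in>C. p $ x) \<le> (real (card C) - 1) / 2"
proof -
  obtain xs where xs: "is_cycle E xs" "set xs = C" "odd (length xs)"
    using C unfolding is_odd_cycle_def by blast
  have sum_set: "sum_list (map (\<lambda>x. p $ x) ys) = (\<Sum>x\<in>set ys. p $ x)" "card (set ys) = length ys"
    if "is_cycle E ys" for ys
    using that by (simp_all add: is_cycle_def sum_list_distinct_conv_sum_set distinct_card)
  have "sum_list (map (\<lambda>x. p $ x) xs) \<le> (real (length xs) - 1) / 2"
  proof (rule sum_list_odd_cycle_le[OF sg _ _ xs(1,3)])
    fix ys assume "is_cycle E ys" "chordless E ys" "odd (length ys)" "5 \<le> length ys"
    then have "is_chordless_odd_cycle_ge5 E (set ys)"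
      unfolding is_chordless_odd_cycle_ge5_def by blast
    then show "sum_list (map (\<lambda>x. p $ x) ys) \<le> (real (length ys) - 1) / 2"
      using hole sum_set \<open>is_cycle E ys\<close> by metis
  qed (rule clique)
  then show ?thesis
    using sum_set[OF xs(1)] xs(2) by simp
qed

lemma HSTAB_iff_slacks_nonneg:
  fixes E :: "'v::finite \<Rightarrow> 'v \<Rightarrow> bool"
  assumes sg: "simple_graph E"
  shows "p \<in> HSTAB E \<longleftrightarrow> (\<forall>c. is_hstab_facet E c \<longrightarrow> 0 \<le> hstab_slack c p)"
proof
  assume p: "p \<in> HSTAB E"
  have "(\<Sum>x\<in>C. p $ x) \<le> real_of_int (cycle_alpha C)" if "is_chordless_odd_cycle_ge5 E C" for C
  proof -
    have "is_odd_cycle E C"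
      using that unfolding is_chordless_odd_cycle_ge5_def is_odd_cycle_def by blast
    then have "(\<Sum>x\<in>C. p $ x) \<le> (real (card C) - 1) / 2"
      using p unfolding HSTAB_def by blast
    then show ?thesis
      using cycle_alpha_eq(2)[OF chordless_odd_cycle_ge5_card(1)[OF that]] by simp
  qed
  with p show "\<forall>c. is_hstab_facet E c \<longrightarrow> 0 \<le> hstab_slack c p"
    unfolding all_hstab_facets_iff by (simp add: HSTAB_def is_maximal_clique_def)
next
  assume "\<forall>c. is_hstab_facet E c \<longrightarrow> 0 \<le> hstab_slack c p"
  then have nonneg: "\<forall>x. 0 \<le> p $ x"
    and max_clique: "\<And>K. is_maximal_clique E K \<Longrightarrow> (\<Sum>x\<in>K. p $ x) \<le> 1"
    and hole: "\<And>C. is_chordless_odd_cycle_ge5 E C \<Longrightarrow> (\<Sum>x\<in>C. p $ x) \<le> (real (card C) - 1) / 2"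
    unfolding all_hstab_facets_iff
    by (auto simp: cycle_alpha_eq(2)[OF chordless_odd_cycle_ge5_card(1)])
  have clique: "(\<Sum>x\<in>K. p $ x) \<le> 1" if K: "is_clique E K" for K
  proof -
    obtain K' where "is_maximal_clique E K'" "K \<subseteq> K'"
      using clique_subset_maximal_clique[OF K] by blast
    then show ?thesis
      using max_clique sum_mono2[of K' K "\<lambda>x. p $ x"] nonneg by fastforce
  qed
  show "p \<in> HSTAB E"
    unfolding HSTAB_def
    using nonneg clique odd_cycle_ineq_if_clique_and_hole_ineqs[OF sg clique hole] by blast
qed

lemma hstab_slack_restrV:
  assumes "0 < f None"
  shows "hstab_slack c (restrV f) = real_of_int (hstab_form c f) / real_of_int (f None)"
  using assms by (cases c) (simp_all add: restrV_def field_simps flip: sum_divide_distrib)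

lemma hstab_cone_0_iff:
  fixes E :: "'v::finite \<Rightarrow> 'v \<Rightarrow> bool"
  assumes sg: "simple_graph E" and f: "0 < f None"
  shows "f \<in> hstab_cone E 0 \<longleftrightarrow> restrV f \<in> HSTAB E"
  using f by (simp add: HSTAB_iff_slacks_nonneg[OF sg] hstab.shifted_cone_def hstab_slack_restrV
      zero_le_divide_iff)

lemma hstab_cone_lower_bounds:
  fixes E :: "'v::finite \<Rightarrow> 'v \<Rightarrow> bool"
  assumes \<mu>: "\<mu> \<in> hstab_cone E a" and "0 \<le> a"
  shows "a \<le> \<mu> (Some z)" "a + \<mu> (Some z) \<le> \<mu> None"
proof -
  have nonneg: "a \<le> \<mu> (Some x)" for x
    using \<mu> by (simp add: mem_hstab_cone_iff)
  then show "a \<le> \<mu> (Some z)" .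
  obtain K where K: "is_maximal_clique E K" "{z} \<subseteq> K"
    using clique_subset_maximal_clique[of E "{z}"] by (auto simp: is_clique_def)
  then have "a + (\<Sum>x\<in>K. \<mu> (Some x)) \<le> \<mu> None"
    using \<mu> by (auto simp: mem_hstab_cone_iff)
  moreover have "\<mu> (Some z) \<le> (\<Sum>x\<in>K. \<mu> (Some x))"
    using K(2) nonneg \<open>0 \<le> a\<close> by (intro member_le_sum) (auto intro: order_trans)
  ultimately show "a + \<mu> (Some z) \<le> \<mu> None"
    by linarith
qed

lemma hstab_cone_0_eq_0:
  fixes E :: "'v::finite \<Rightarrow> 'v \<Rightarrow> bool"
  assumes "\<mu> \<in> hstab_cone E 0" "\<mu> None \<le> 0"
  shows "\<mu> = 0"
proof
  fix w
  have "0 \<le> \<mu> (Some z)" "\<mu> (Some z) \<le> \<mu> None" for z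
    using hstab_cone_lower_bounds[OF assms(1)] by simp_all
  then have "\<mu> None = 0" "\<mu> (Some z) = 0" for z
    using assms(2) by (meson order.antisym order.trans)+
  then show "\<mu> w = 0 w"
    by (cases w) (simp_all add: zero_fun_def)
qed

lemma open_strict_slacks: "open {p. \<forall>c. is_hstab_facet E c \<longrightarrow> 0 < hstab_slack c p}"
proof -
  have "continuous_on UNIV (hstab_slack c)" for c :: "'a hstab_ineq"
    by (cases c)
      (auto intro!: continuous_on_diff continuous_on_sum continuous_on_component continuous_on_id)
  then have "open {p. 0 < hstab_slack c p}" for c :: "'a hstab_ineq"
    using open_Collect_less[OF continuous_on_const] by blast
  moreover have "finite {c :: 'a hstab_ineq. is_hstab_facet E c}"
    by (rule hstab.finite_forms)
  moreover have "{p. \<forall>c. is_hstab_facet E c \<longrightarrow> 0 < hstab_slack c p}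
      = (\<Inter>c\<in>{c. is_hstab_facet E c}. {p. 0 < hstab_slack c p})"
    by auto
  ultimately show ?thesis
    by (simp add: open_INT)
qed

lemma strict_slacks_nonempty:
  fixes E :: "'v::finite \<Rightarrow> 'v \<Rightarrow> bool"
  shows "{p. \<forall>c. is_hstab_facet E c \<longrightarrow> 0 < hstab_slack c p} \<noteq> {}"
proof -
  define N where "N = real (card (UNIV :: 'v set)) + 1"
  define p :: "real ^ 'v" where "p = (\<chi> x. 1 / N)"
  have N: "0 < N" "real (card A) < N" for A :: "'v set"
  proof -
    have "card A \<le> card (UNIV :: 'v set)"
      by (rule card_mono) simp_all
    then show "0 < N" "real (card A) < N"
      by (simp_all add: N_def)
  qed
  have sum_p: "(\<Sum>x\<in>A. p $ x) < 1" for A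
    using N by (simp add: p_def)
  have "0 < hstab_slack c p" if "is_hstab_facet E c" for c
  proof (cases c)
    case (Hole_ineq C)
    then have "1 \<le> cycle_alpha C"
      using that cycle_alpha_eq(1) chordless_odd_cycle_ge5_card by fastforce
    then show ?thesis
      using Hole_ineq sum_p[of C] by simp
  qed (use N sum_p in \<open>simp_all add: p_def\<close>)
  then show ?thesis
    by blast
qed

lemma hstab_slack_descent:
  fixes E :: "'v::finite \<Rightarrow> 'v \<Rightarrow> bool"
  assumes "is_hstab_facet E c"
  shows "\<exists>g d. 0 < g \<and> (\<forall>t p. hstab_slack c (p + t *\<^sub>R d) = hstab_slack c p - t * g)"
proof -
  define one_on :: "'v set \<Rightarrow> real ^ 'v" where "one_on A = (\<chi> x. if x \<in> A then 1 else 0)" for A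
  have sum_one_on: "(\<Sum>x\<in>A. (p + t *\<^sub>R one_on A) $ x) = (\<Sum>x\<in>A. p $ x) + t * real (card A)"
    for p t A by (simp add: one_on_def sum.distrib)
  show ?thesis
  proof (cases c)
    case (Nonneg_ineq z)
    then show ?thesis
      by (intro exI[of _ 1] exI[of _ "- axis z 1"]) (simp add: axis_def)
  next
    case (Clique_ineq K)
    then have "0 < real (card K)"
      using assms maximal_clique_nonempty by (simp add: card_gt_0_iff)
    then show ?thesis
      using Clique_ineq sum_one_on by (intro exI[of _ "real (card K)"] exI[of _ "one_on K"]) simp
  next
    case (Hole_ineq C)
    then have "0 < real (card C)"
      using assms chordless_odd_cycle_ge5_card(2) by fastforce
    then show ?thesis
      using Hole_ineq sum_one_on by (intro exI[of _ "real (card C)"] exI[of _ "one_on C"]) simp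
  qed
qed

lemma interior_HSTAB_subset:
  fixes E :: "'v::finite \<Rightarrow> 'v \<Rightarrow> bool"
  assumes sg: "simple_graph E"
  shows "interior (HSTAB E) \<subseteq> {p. \<forall>c. is_hstab_facet E c \<longrightarrow> 0 < hstab_slack c p}"
proof (intro subsetI CollectI allI impI)
  fix p c assume "p \<in> interior (HSTAB E)" and c: "is_hstab_facet E c"
  then obtain e where e: "0 < e" "ball p e \<subseteq> HSTAB E"
    using mem_interior by blast
  obtain g d where dg: "0 < g" "\<And>t p. hstab_slack c (p + t *\<^sub>R d) = hstab_slack c p - t * g"
    using hstab_slack_descent[OF c] by blast
  define t where "t = e / (2 * (norm d + 1))"
  have "0 < t"
    unfolding t_def using e(1) by (intro divide_pos_pos) (auto simp: add_nonneg_pos)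
  have "t * norm d \<le> t * (norm d + 1)"
    using \<open>0 < t\<close> by simp
  also have "\<dots> = e / 2"
  proof -
    have "norm d + 1 \<noteq> 0" "2 * norm d + 2 \<noteq> 0"
      using norm_ge_zero[of d] by linarith+
    then show ?thesis
      by (simp add: t_def field_simps)
  qed
  finally have "dist p (p + t *\<^sub>R d) < e"
    using e(1) \<open>0 < t\<close> by (simp add: dist_norm)
  then have "p + t *\<^sub>R d \<in> HSTAB E"
    using e(2) by auto
  then have "0 \<le> hstab_slack c (p + t *\<^sub>R d)"
    using HSTAB_iff_slacks_nonneg[OF sg] c by blast
  moreover have "0 < t * g"
    using \<open>0 < t\<close> dg(1) by simp
  ultimately show "0 < hstab_slack c p"
    using dg(2)[where t = t and p = p] by linarith
qed

lemma rel_interior_HSTAB: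
  fixes E :: "'v::finite \<Rightarrow> 'v \<Rightarrow> bool"
  assumes sg: "simple_graph E"
  shows "rel_interior (HSTAB E) = {p. \<forall>c. is_hstab_facet E c \<longrightarrow> 0 < hstab_slack c p}"
proof -
  let ?S = "{p. \<forall>c. is_hstab_facet E c \<longrightarrow> 0 < hstab_slack c p}"
  have "?S \<subseteq> HSTAB E"
    using HSTAB_iff_slacks_nonneg[OF sg] by (auto intro: less_imp_le)
  then have "?S \<subseteq> interior (HSTAB E)"
    using open_strict_slacks by (rule interior_maximal)
  then have "interior (HSTAB E) = ?S"
    using interior_HSTAB_subset[OF sg] by blast
  moreover from this have "rel_interior (HSTAB E) = interior (HSTAB E)"
    using strict_slacks_nonempty by (intro rel_interior_nonempty_interior) simp
  ultimately show ?thesis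
    by simp
qed

lemma hstab_cone_1_iff:
  fixes E :: "'v::finite \<Rightarrow> 'v \<Rightarrow> bool"
  assumes sg: "simple_graph E"
  shows "f \<in> hstab_cone E 1 \<longleftrightarrow> 0 < f None \<and> restrV f \<in> rel_interior (HSTAB E)"
proof (cases "0 < f None")
  case True
  then show ?thesis
    by (simp add: rel_interior_HSTAB[OF sg] hstab.shifted_cone_def hstab_slack_restrV
        zero_less_divide_iff int_one_le_iff_zero_less)
next
  case False
  then show ?thesis
    using hstab_cone_lower_bounds[of f E 1 undefined] by force
qed

section \<open>The Ehrhart ring and its canonical ideal\<close>

lemma poly_mapping_sum_single_lookup:
  "p = (\<Sum>k\<in>Poly_Mapping.keys p. Poly_Mapping.single k (Poly_Mapping.lookup p k))"
  (is "p = ?s")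
proof (rule poly_mapping_eqI)
  fix i
  have "Poly_Mapping.lookup ?s i
      = (\<Sum>k\<in>Poly_Mapping.keys p. if k = i then Poly_Mapping.lookup p k else 0)"
    unfolding lookup_sum by (rule sum.cong) (simp_all add: lookup_single when_def)
  also have "\<dots> = Poly_Mapping.lookup p i"
    by (simp add: in_keys_iff)
  finally show "Poly_Mapping.lookup p i = Poly_Mapping.lookup ?s i"
    by simp
qed

lemma sum_in_ehrhart_ring: "(\<And>k. k \<in> A \<Longrightarrow> g k \<in> ehrhart_ring E) \<Longrightarrow> sum g A \<in> ehrhart_ring E"
proof (induction A rule: infinite_finite_induct)
  case (infinite A)
  then show ?case
    using ehrhart_ring.const[of 0 E] by simp
next
  case empty
  then show ?case
    using ehrhart_ring.const[of 0 E] by simp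
qed (simp add: ehrhart_ring.add)

lemma single_in_ehrhart_ring:
  fixes E :: "'v::finite \<Rightarrow> 'v \<Rightarrow> bool"
  assumes sg: "simple_graph E" and k: "k \<in> hstab_cone E 0"
  shows "(Poly_Mapping.single k c :: ('v, 'k::field) laurent) \<in> ehrhart_ring E"
proof (cases "0 < k None")
  case True
  then have "monom k \<in> ehrhart_ring E"
    using ehrhart_ring.gen hstab_cone_0_iff[OF sg] k by blast
  then have "Poly_Mapping.single 0 c * monom k \<in> ehrhart_ring E"
    by (rule ehrhart_ring.mult[OF ehrhart_ring.const])
  then show ?thesis
    by (simp add: monom_def mult_single)
next
  case False
  then show ?thesis
    using hstab_cone_0_eq_0[OF k] ehrhart_ring.const by simp
qed

lemma ehrhart_ring_eq_hstab_span:
  fixes E :: "'v::finite \<Rightarrow> 'v \<Rightarrow> bool"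
  assumes sg: "simple_graph E"
  shows "(ehrhart_ring E :: ('v, 'k::field) laurent set) = hstab_span E 0"
proof (intro set_eqI iffI)
  fix p :: "('v, 'k) laurent"
  assume "p \<in> ehrhart_ring E"
  then show "p \<in> hstab_span E 0"
  proof induction
    case (const c)
    then show ?case
      using hstab.zero_in_shifted_cone[of E] by (simp add: hstab.monomial_span_def)
  next
    case (gen f)
    then show ?case
      using hstab_cone_0_iff[OF sg] by simp
  next
    case (mult p q)
    then show ?case
      using hstab.monomial_span_mult by fastforce
  qed (rule hstab.monomial_span_add)
next
  fix p :: "('v, 'k) laurent"
  assume p: "p \<in> hstab_span E 0"
  have "(\<Sum>k\<in>Poly_Mapping.keys p. Poly_Mapping.single k (Poly_Mapping.lookup p k))
      \<in> ehrhart_ring E"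
    using p single_in_ehrhart_ring[OF sg]
    by (intro sum_in_ehrhart_ring) (auto simp: hstab.monomial_span_def)
  then show "p \<in> ehrhart_ring E"
    by (simp flip: poly_mapping_sum_single_lookup)
qed

lemma canonical_ideal_eq_hstab_span:
  fixes E :: "'v::finite \<Rightarrow> 'v \<Rightarrow> bool"
  assumes "simple_graph E"
  shows "(canonical_ideal E :: ('v, 'k::field) laurent set) = hstab_span E 1"
  unfolding canonical_ideal_def hstab.monomial_span_def using hstab_cone_1_iff[OF assms] by blast

section \<open>Every facet inequality is tight\<close>

(* Homogenising coordinate N, weight M on S and 1 elsewhere; for suitable N, M this point lies
   on one facet and strictly inside all the others. *)
definition weight_on :: "int \<Rightarrow> int \<Rightarrow> 'v set \<Rightarrow> 'v option \<Rightarrow> int" where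
  "weight_on N M S = (\<lambda>x. case x of None \<Rightarrow> N | Some y \<Rightarrow> if y \<in> S then M else 1)"

lemma hstab_form_weight_on:
  fixes S :: "'v::finite set"
  shows "hstab_form (Nonneg_ineq y) (weight_on N M S) = (if y \<in> S then M else 1)"
    "hstab_form (Clique_ineq K) (weight_on N M S)
      = N - (M * int (card (K \<inter> S)) + int (card (K - S)))"
    "hstab_form (Hole_ineq C) (weight_on N M S)
      = N * cycle_alpha C - (M * int (card (C \<inter> S)) + int (card (C - S)))"
  by (simp_all add: weight_on_def sum.If_cases Diff_eq)

lemma card_le_CARD: "int (card (A :: 'v::finite set)) \<le> int CARD('v)"
  by (simp add: card_mono)

lemma cycle_alpha_ge_2: "is_chordless_odd_cycle_ge5 E C \<Longrightarrow> 2 \<le> cycle_alpha C"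
  using cycle_alpha_eq(1) chordless_odd_cycle_ge5_card by fastforce

lemma card_clique_inter_hole:
  assumes "is_clique E K" "is_chordless_odd_cycle_ge5 E C"
  shows "card (K \<inter> C) \<le> 2"
  using assms card_clique_inter_chordless_cycle
  unfolding is_chordless_odd_cycle_ge5_def by fastforce

lemma card_inter_holes:
  fixes E :: "'v::finite \<Rightarrow> 'v \<Rightarrow> bool"
  assumes sg: "simple_graph E" and C: "is_chordless_odd_cycle_ge5 E C"
    and C': "is_chordless_odd_cycle_ge5 E C'" and "C' \<noteq> C"
  shows "int (card (C' \<inter> C)) \<le> 2 * cycle_alpha C'"
proof -
  obtain xs where xs: "is_cycle E xs" "chordless E xs" "set xs = C"
    using C unfolding is_chordless_odd_cycle_ge5_def by blast
  obtain ys where ys: "is_cycle E ys" "set ys = C'"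
    using C' unfolding is_chordless_odd_cycle_ge5_def by blast
  have "\<not> C' \<subseteq> C"
    using chordless_cycle_subset_eq[OF sg xs(1,2) ys(1)] xs(3) ys(2) \<open>C' \<noteq> C\<close> by blast
  then have "card (C' \<inter> C) < card C'"
    by (intro psubset_card_mono) auto
  then show ?thesis
    using cycle_alpha_eq(1)[OF chordless_odd_cycle_ge5_card(1)[OF C']] by linarith
qed

lemma nonneg_ineq_separated:
  fixes E :: "'v::finite \<Rightarrow> 'v \<Rightarrow> bool"
  shows "\<exists>w. hstab_form (Nonneg_ineq z) w = 0
    \<and> (\<forall>c. is_hstab_facet E c \<and> c \<noteq> Nonneg_ineq z \<longrightarrow> 1 \<le> hstab_form c w)"
proof (intro exI conjI allI impI)
  let ?U = "int CARD('v)"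
  let ?w = "weight_on (?U + 1) 0 {z}"
  show "hstab_form (Nonneg_ineq z) ?w = 0"
    by (simp add: weight_on_def)
  fix c assume c: "is_hstab_facet E c \<and> c \<noteq> Nonneg_ineq z"
  show "1 \<le> hstab_form c ?w"
  proof (cases c)
    case (Clique_ineq K)
    then show ?thesis
      using card_le_CARD[of "K - {z}"] by (simp add: hstab_form_weight_on del: hstab_form.simps)
  next
    case (Hole_ineq C)
    have "(?U + 1) * 2 \<le> (?U + 1) * cycle_alpha C"
      using cycle_alpha_ge_2[of E C] c Hole_ineq by (intro mult_left_mono) auto
    then show ?thesis
      using card_le_CARD[of "C - {z}"] Hole_ineq
      by (simp add: hstab_form_weight_on del: hstab_form.simps)
  qed (use c in \<open>simp add: hstab_form_weight_on del: hstab_form.simps\<close>)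
qed

lemma clique_ineq_separated:
  fixes E :: "'v::finite \<Rightarrow> 'v \<Rightarrow> bool"
  assumes K: "is_maximal_clique E K"
  shows "\<exists>w. hstab_form (Clique_ineq K) w = 0
    \<and> (\<forall>c. is_hstab_facet E c \<and> c \<noteq> Clique_ineq K \<longrightarrow> 1 \<le> hstab_form c w)"
proof (intro exI conjI allI impI)
  let ?M = "int CARD('v) + 1" and ?k = "int (card K)"
  let ?w = "weight_on (?M * ?k) ?M K"
  have "1 \<le> ?k"
    using maximal_clique_nonempty[OF K] by (simp add: card_gt_0_iff Suc_le_eq)
  show "hstab_form (Clique_ineq K) ?w = 0"
    by (simp add: hstab_form_weight_on del: hstab_form.simps)
  fix c assume c: "is_hstab_facet E c \<and> c \<noteq> Clique_ineq K"
  show "1 \<le> hstab_form c ?w"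
  proof (cases c)
    case (Nonneg_ineq y)
    then show ?thesis
      by (simp add: hstab_form_weight_on del: hstab_form.simps)
  next
    case (Clique_ineq K')
    then have "K' \<noteq> K" "is_clique E K'"
      using c by (auto simp: is_maximal_clique_def)
    then have "\<not> K \<subseteq> K'"
      using K unfolding is_maximal_clique_def by blast
    then have "card (K' \<inter> K) < card K"
      by (intro psubset_card_mono) auto
    then have "?M * int (card (K' \<inter> K)) \<le> ?M * (?k - 1)"
      by (intro mult_left_mono) auto
    then show ?thesis
      using card_le_CARD[of "K' - K"] Clique_ineq
      by (simp add: hstab_form_weight_on algebra_simps del: hstab_form.simps)
  next
    case (Hole_ineq C)
    then have C: "is_chordless_odd_cycle_ge5 E C"
      using c by simp
    have "card (C \<inter> K) \<le> 2"
      using card_clique_inter_hole[OF _ C, of K] K by (simp add: is_maximal_clique_def Int_commute)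
    moreover have "card (C \<inter> K) \<le> card K"
      by (simp add: card_mono)
    moreover have "?k * 2 \<le> ?k * cycle_alpha C"
      using cycle_alpha_ge_2[OF C] \<open>1 \<le> ?k\<close> by (intro mult_left_mono) auto
    ultimately have "1 \<le> ?k * cycle_alpha C - int (card (C \<inter> K))"
      using \<open>1 \<le> ?k\<close> by linarith
    then have "?M * 1 \<le> ?M * (?k * cycle_alpha C - int (card (C \<inter> K)))"
      by (intro mult_left_mono) auto
    then show ?thesis
      using card_le_CARD[of "C - K"] Hole_ineq
      by (simp add: hstab_form_weight_on algebra_simps del: hstab_form.simps)
  qed
qed

lemma hole_ineq_separated:
  fixes E :: "'v::finite \<Rightarrow> 'v \<Rightarrow> bool"
  assumes sg: "simple_graph E" and C: "is_chordless_odd_cycle_ge5 E C"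
  shows "\<exists>w. hstab_form (Hole_ineq C) w = 0
    \<and> (\<forall>c. is_hstab_facet E c \<and> c \<noteq> Hole_ineq C \<longrightarrow> 1 \<le> hstab_form c w)"
proof (intro exI conjI allI impI)
  let ?t = "int CARD('v) + 1" and ?k = "cycle_alpha C"
  let ?w = "weight_on ((2 * ?k + 1) * ?t) (?k * ?t) C"
  have k: "2 \<le> ?k" "int (card C) = 2 * ?k + 1"
    using cycle_alpha_ge_2[OF C] cycle_alpha_eq(1)[OF chordless_odd_cycle_ge5_card(1)[OF C]]
    by simp_all
  show "hstab_form (Hole_ineq C) ?w = 0"
    using k(2) by (simp add: hstab_form_weight_on algebra_simps del: hstab_form.simps)
  fix c assume c: "is_hstab_facet E c \<and> c \<noteq> Hole_ineq C"
  show "1 \<le> hstab_form c ?w"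
  proof (cases c)
    case (Nonneg_ineq y)
    have "1 * 1 \<le> ?k * ?t"
      using k(1) by (intro mult_mono) auto
    then show ?thesis
      using Nonneg_ineq by (simp add: hstab_form_weight_on del: hstab_form.simps)
  next
    case (Clique_ineq K)
    then have "card (K \<inter> C) \<le> 2"
      using c card_clique_inter_hole[OF _ C] by (simp add: is_maximal_clique_def)
    then have "?k * ?t * int (card (K \<inter> C)) \<le> ?k * ?t * 2"
      using k(1) by (intro mult_left_mono) auto
    then show ?thesis
      using card_le_CARD[of "K - C"] Clique_ineq
      by (simp add: hstab_form_weight_on algebra_simps del: hstab_form.simps)
  next
    case (Hole_ineq C')
    then have C': "is_chordless_odd_cycle_ge5 E C'" and "C' \<noteq> C"
      using c by simp_all
    have "?k * ?t * int (card (C' \<inter> C)) \<le> ?k * ?t * (2 * cycle_alpha C')"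
      using card_inter_holes[OF sg C C' \<open>C' \<noteq> C\<close>] k(1) by (intro mult_left_mono) auto
    moreover have "?t * 1 \<le> ?t * cycle_alpha C'"
      using cycle_alpha_ge_2[OF C'] by (intro mult_left_mono) auto
    ultimately show ?thesis
      using card_le_CARD[of "C' - C"] Hole_ineq
      by (simp add: hstab_form_weight_on algebra_simps del: hstab_form.simps)
  qed
qed

lemma ex_hstab_form_eq_1:
  fixes E :: "'v::finite \<Rightarrow> 'v \<Rightarrow> bool"
  assumes "is_hstab_facet E c"
  shows "\<exists>\<nu>. hstab_form c \<nu> = 1"
proof (cases c)
  case (Nonneg_ineq z)
  then show ?thesis
    by (intro exI[of _ "\<lambda>x. 1"]) simp
next
  case (Clique_ineq K)
  then show ?thesis
    by (intro exI[of _ "\<lambda>x. if x = None then 1 else 0"]) simp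
next
  case (Hole_ineq C)
  then obtain v where "v \<in> C"
    using assms chordless_odd_cycle_ge5_card(2)[of E C] by fastforce
  then show ?thesis
    using Hole_ineq by (intro exI[of _ "\<lambda>x. if x = Some v then -1 else 0"]) simp
qed

lemma one_le_hstab_form_weight_on:
  fixes E :: "'v::finite \<Rightarrow> 'v \<Rightarrow> bool"
  assumes "is_hstab_facet E c"
  shows "1 \<le> hstab_form c (weight_on (int CARD('v) + 1) 1 {})"
proof (cases c)
  case (Clique_ineq K)
  then show ?thesis
    using card_le_CARD[of K] by (simp add: hstab_form_weight_on del: hstab_form.simps)
next
  case (Hole_ineq C)
  have "(int CARD('v) + 1) * 2 \<le> (int CARD('v) + 1) * cycle_alpha C"
    using cycle_alpha_ge_2[of E C] assms Hole_ineq by (intro mult_left_mono) auto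
  then show ?thesis
    using card_le_CARD[of C] Hole_ineq by (simp add: hstab_form_weight_on del: hstab_form.simps)
qed (simp add: weight_on_def)

lemma hstab_ineq_separated:
  fixes E :: "'v::finite \<Rightarrow> 'v \<Rightarrow> bool"
  assumes "simple_graph E" "is_hstab_facet E c"
  obtains w where "hstab_form c w = 0" "\<And>c'. is_hstab_facet E c' \<Longrightarrow> c' \<noteq> c \<Longrightarrow> 1 \<le> hstab_form c' w"
proof -
  have "\<exists>w. hstab_form c w = 0 \<and> (\<forall>c'. is_hstab_facet E c' \<and> c' \<noteq> c \<longrightarrow> 1 \<le> hstab_form c' w)"
  proof (cases c)
    case (Nonneg_ineq z)
    then show ?thesis
      using nonneg_ineq_separated by blast
  next
    case (Clique_ineq K)
    then show ?thesis
      using clique_ineq_separated assms(2) by simp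
  next
    case (Hole_ineq C)
    then show ?thesis
      using hole_ineq_separated assms by simp
  qed
  then show ?thesis
    using that by blast
qed

lemma hstab_lattice_cone:
  fixes E :: "'v::finite \<Rightarrow> 'v \<Rightarrow> bool"
  assumes sg: "simple_graph E"
  shows "lattice_cone {c. is_hstab_facet E c} hstab_form"
proof (intro lattice_cone.intro lattice_cone_axioms.intro)
  show "integral_linear_forms {c. is_hstab_facet E c} hstab_form"
    by (rule hstab.integral_linear_forms_axioms)
  have "Nonneg_ineq undefined \<in> {c. is_hstab_facet E c}"
    by simp
  then show "{c. is_hstab_facet E c} \<noteq> {}"
    by blast
  show "\<exists>\<rho>. \<forall>c\<in>{c. is_hstab_facet E c}. 1 \<le> hstab_form c \<rho>"
  proof (intro exI ballI)
    fix c assume "c \<in> {c. is_hstab_facet E c}"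
    then show "1 \<le> hstab_form c (weight_on (int CARD('v) + 1) 1 {})"
      by (simp add: one_le_hstab_form_weight_on del: hstab_form.simps)
  qed
  fix c a assume c: "c \<in> {c. is_hstab_facet E c}"
  obtain \<nu>\<^sub>0 where \<nu>\<^sub>0: "hstab_form c \<nu>\<^sub>0 = 1"
    using ex_hstab_form_eq_1 c by blast
  obtain w where w: "hstab_form c w = 0" "\<And>c'. is_hstab_facet E c' \<Longrightarrow> c' \<noteq> c \<Longrightarrow> 1 \<le> hstab_form c' w"
    using hstab_ineq_separated[OF sg] c by blast
  show "\<exists>\<nu>\<in>hstab_cone E a. hstab_form c \<nu> = a"
    by (rule hstab.facet_tightI[OF c \<nu>\<^sub>0 w(1)]) (use w(2) in blast)
qed

theorem proposition3p7:
  fixes E :: "'v::finite \<Rightarrow> 'v \<Rightarrow> bool"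
    and n :: int and \<mu> :: "'v option \<Rightarrow> int"
  assumes "simple_graph E"
  shows "mem_frac (monom \<mu> :: ('v, 'k::field) laurent)
           (dpow (ehrhart_ring E) (as_frac (ehrhart_ring E) (canonical_ideal E)) n)
         \<longleftrightarrow> \<mu> \<in> U_set E n"
proof -
  interpret lattice_cone "{c. is_hstab_facet E c}" hstab_form
    using assms by (rule hstab_lattice_cone)
  show ?thesis
    using mem_frac_monom_dpow_iff[of \<mu> n] hstab_cone_eq_U_set[of E n]
    by (simp add: ehrhart_ring_eq_hstab_span[OF assms] canonical_ideal_eq_hstab_span[OF assms])
qed

end
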